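(* Let $A_{\pi,\varrho}$ ($\pi,\varrho\in K$) denote the two-dimensional algebra with basis $r,r^2$ and multiplication $r\cdot r=r^2$, $r\cdot r^2=\pi r^2$, $r^2\cdot r=\varrho r^2$, $r^2\cdot r^2=\pi\varrho r^2$ (these algebras are bicommutative). (i) As subvarieties of $\mathfrak B$, $\mathrm{var}(A_{0,1})$ is defined by the identity $x_1(x_2x_3)=0$ and $\mathrm{var}(A_{1,0})$ is defined by the identity $(x_1x_2)x_3=0$ (i.e. each T-ideal of identities is generated, modulo the bicommutativity identities, by that single identity). Their cocharacters and codimensions coincide: $\chi_1=\chi_{(1)}$ and $\chi_n(A_{0,1})=\chi_n(A_{1,0})=\chi_{(n)}+\chi_{(n-1,1)}$ for $n\ge2$, and $c_n(A_{0,1})=c_n(A_{1,0})=n$ for all $n\ge1$. (ii) The algebra $A_{1,-1}$ generates the whole variety $\mathfrak B$; that is, $A_{1,-1}$ satisfies exactly the polynomial identities that follow from bicommutativity.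
   Context: $K$ is a field of characteristic $0$. $\mathfrak B$ is the variety of bicommutative algebras, defined by $(x_1x_2)x_3=(x_1x_3)x_2$ and $x_1(x_2x_3)=x_2(x_1x_3)$. For an algebra $A$, $\mathrm{var}(A)$ is the variety it generates; $P_n(A)$ is the space of multilinear elements of degree $n$ in $x_1,\dots,x_n$ of the relatively free algebra of $\mathrm{var}(A)$, $c_n(A)=\dim P_n(A)$, and $\chi_n(A)$ is the $S_n$-character of $P_n(A)$ under $\sigma f(x_1,\dots,x_n)=f(x_{\sigma(1)},\dots,x_{\sigma(n)})$; $\chi_\lambda$ is the irreducible $S_n$-character indexed by $\lambda$. *)

theory Defs
  imports Main "HOL.Vector_Spaces" "HOL-Library.Poly_Mapping" "HOL-Library.Product_Plus" "HOL-Library.FuncSet" "HOL-Combinatorics.Permutations"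
begin

datatype mon = V nat | M mon mon

type_synonym 'k npoly = "mon \<Rightarrow>\<^sub>0 'k"

definition pscale :: "'k::field \<Rightarrow> 'k npoly \<Rightarrow> 'k npoly" where
  "pscale c p = Poly_Mapping.map (\<lambda>x. c * x) p"

definition X :: "nat \<Rightarrow> 'k::field npoly" where
  "X i = Poly_Mapping.single (V i) 1"

definition pmul :: "'k::field npoly \<Rightarrow> 'k npoly \<Rightarrow> 'k npoly" where
  "pmul p q = (\<Sum>s\<in>Poly_Mapping.keys p. \<Sum>t\<in>Poly_Mapping.keys q. Poly_Mapping.single (M s t) (Poly_Mapping.lookup p s * Poly_Mapping.lookup q t))"

fun tsubst :: "(nat \<Rightarrow> 'k::field npoly) \<Rightarrow> mon \<Rightarrow> 'k npoly" where
  "tsubst \<sigma> (V i) = \<sigma> i"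
| "tsubst \<sigma> (M s t) = pmul (tsubst \<sigma> s) (tsubst \<sigma> t)"

definition psubst :: "(nat \<Rightarrow> 'k::field npoly) \<Rightarrow> 'k npoly \<Rightarrow> 'k npoly" where
  "psubst \<sigma> p = (\<Sum>t\<in>Poly_Mapping.keys p. pscale (Poly_Mapping.lookup p t) (tsubst \<sigma> t))"

inductive_set tideal :: "'k::field npoly set \<Rightarrow> 'k npoly set" for S where
  gen: "s \<in> S \<Longrightarrow> psubst \<sigma> s \<in> tideal S"
| zero: "0 \<in> tideal S"
| add: "f \<in> tideal S \<Longrightarrow> g \<in> tideal S \<Longrightarrow> f + g \<in> tideal S"
| scale: "f \<in> tideal S \<Longrightarrow> pscale c f \<in> tideal S"
| lmul: "f \<in> tideal S \<Longrightarrow> pmul g f \<in> tideal S"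
| rmul: "f \<in> tideal S \<Longrightarrow> pmul f g \<in> tideal S"

definition bicomm_ids :: "'k::field npoly set" where
  "bicomm_ids = { pmul (pmul (X 1) (X 2)) (X 3) - pmul (pmul (X 1) (X 3)) (X 2),
                  pmul (X 1) (pmul (X 2) (X 3)) - pmul (X 2) (pmul (X 1) (X 3)) }"

text \<open>An algebra is given by its additive group 'a, a scalar multiplication by K and a
  (bilinear) multiplication.\<close>
fun teval :: "('a \<Rightarrow> 'a \<Rightarrow> 'a) \<Rightarrow> (nat \<Rightarrow> 'a) \<Rightarrow> mon \<Rightarrow> 'a" where
  "teval mul a (V i) = a i"
| "teval mul a (M s t) = mul (teval mul a s) (teval mul a t)"

text \<open>Elements of A_{pi,rho} are coordinate pairs (a1,a2) meaning a1 r + a2 r^2.\<close>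
definition Asc :: "'k::field \<Rightarrow> 'k \<times> 'k \<Rightarrow> 'k \<times> 'k" where
  "Asc c v = (c * fst v, c * snd v)"

definition Amul :: "'k::field \<Rightarrow> 'k \<Rightarrow> 'k \<times> 'k \<Rightarrow> 'k \<times> 'k \<Rightarrow> 'k \<times> 'k" where
  "Amul \<pi> \<rho> u v = (0, fst u * fst v + \<pi> * fst u * snd v + \<rho> * snd u * fst v
                        + \<pi> * \<rho> * snd u * snd v)"

text \<open>Identities of A_{pi,rho} (pairs carry their componentwise additive structure).\<close>
definition IdA :: "'k::field \<Rightarrow> 'k \<Rightarrow> 'k npoly set" where
  "IdA \<pi> \<rho> = {p. \<forall>a. (\<Sum>t\<in>Poly_Mapping.keys p. Asc (Poly_Mapping.lookup p t) (teval (Amul \<pi> \<rho>) a t))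
                       = ((0::'k), (0::'k))}"

fun leaves :: "mon \<Rightarrow> nat list" where
  "leaves (V i) = [i]"
| "leaves (M s t) = leaves s @ leaves t"

definition Pn :: "nat \<Rightarrow> 'k::field npoly set" where
  "Pn n = {p. \<forall>t\<in>Poly_Mapping.keys p. mset (leaves t) = mset [1..<n+1]}"

definition pdim :: "'k::field npoly set \<Rightarrow> nat" where
  "pdim W = vector_space.dim pscale W"

definition ptrace :: "'k::field npoly set \<Rightarrow> ('k npoly \<Rightarrow> 'k npoly) \<Rightarrow> 'k" where
  "ptrace W T = (let B = (SOME B. B \<subseteq> W \<and> \<not> module.dependent pscale B \<and> module.span pscale B = W)
                 in (\<Sum>b\<in>B. module.representation pscale B (T b) b))"

text \<open>c_n(A) = dim P_n(A) = dim (P_n / (P_n \<inter> Id(A))).\<close>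
definition codim :: "'k::field npoly set \<Rightarrow> nat \<Rightarrow> nat" where
  "codim I n = pdim (Pn n :: 'k npoly set) - pdim (Pn n \<inter> I)"

definition pact :: "(nat \<Rightarrow> nat) \<Rightarrow> 'k::field npoly \<Rightarrow> 'k npoly" where
  "pact \<sigma> p = psubst (\<lambda>i. X (\<sigma> i)) p"

text \<open>chi_n(A)(sigma): the character of P_n(A) = P_n/(P_n \<inter> Id(A)), i.e. the trace of sigma
  on P_n minus its trace on the invariant subspace P_n \<inter> Id(A).\<close>
definition cochar :: "'k::field npoly set \<Rightarrow> nat \<Rightarrow> (nat \<Rightarrow> nat) \<Rightarrow> 'k" where
  "cochar I n \<sigma> = ptrace (Pn n) (pact \<sigma>) - ptrace (Pn n \<inter> I) (pact \<sigma>)"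

text \<open>Permutation character of S_n on tabloids of a composition mu of n (i.e. induced from the
  trivial character of the Young subgroup): the number of sigma-fixed tabloids.\<close>
definition young_char :: "nat list \<Rightarrow> nat \<Rightarrow> (nat \<Rightarrow> nat) \<Rightarrow> nat" where
  "young_char \<mu> n \<sigma> = card {f \<in> {1..n} \<rightarrow>\<^sub>E {0..<length \<mu>}.
       (\<forall>k\<in>{1..n}. f (\<sigma> k) = f k) \<and> (\<forall>i<length \<mu>. card {k\<in>{1..n}. f k = i} = \<mu> ! i)}"

text \<open>Irreducible character chi_lambda of S_n (lambda a partition of n, given as a
  non-increasing list of positive parts), via the Jacobi-Trudi / determinantal formula
  chi_lambda = det (xi^{(lambda_i - i + j)}).\<close>
definition irr_char :: "nat list \<Rightarrow> nat \<Rightarrow> (nat \<Rightarrow> nat) \<Rightarrow> 'k::field" where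
  "irr_char lam n \<sigma> = (\<Sum>w | w permutes {0..<length lam}.
      of_int (sign w) *
      (if \<forall>i<length lam. int i \<le> int (lam ! i) + int (w i)
       then of_nat (young_char (map (\<lambda>i. nat (int (lam ! i) + int (w i) - int i)) [0..<length lam]) n \<sigma>)
       else 0))"

end

theory Submission
  imports Defs "HOL-Computational_Algebra.Polynomial"
begin

(*
  Modulo the bicommutative identities every product monomial equals a canonical one,
  x_l1 (x_l2 ( ... (x_lk x_rm) ... x_r1)), determined by the multisets L and R of variables
  that occur as left, resp. right, factors of products. In A_{pi,rho} one has
  u v = (u1 + rho u2) (v1 + pi v2) r^2, so the canonical monomial evaluates to
  pi^(|L|-1) rho^(|R|-1) times a product of the left form u1 + rho u2 over L and of the right
  form v1 + pi v2 over R. For pi ~= rho the two forms are independent, and a Kronecker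
  substitution shows that these products are linearly independent functions. Hence a polynomial
  is an identity of A_{pi,rho} iff its canonical reduction involves only monomials of weight
  pi^(|L|-1) rho^(|R|-1) = 0, which identifies the T-ideals. In degree n >= 2 the canonical
  multilinear monomials of nonzero weight form a basis of P_n(A_{pi,rho}) that S_n permutes,
  so the cocharacter is a permutation character. For A_{1,0} (dually A_{0,1}) the basis is
  indexed by the variable standing alone on the right (left), which gives the natural
  permutation character chi_(n) + chi_(n-1,1).
*)

notation pscale (infixr "\<cdot>" 75)

lemma lookup_pscale [simp]: "Poly_Mapping.lookup (c \<cdot> p) m = c * Poly_Mapping.lookup p m"
  by (simp add: pscale_def map.rep_eq when_def)

interpretation free: vector_space "pscale :: 'k::field \<Rightarrow> 'k npoly \<Rightarrow> 'k npoly"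
  by unfold_locales (auto intro!: poly_mapping_eqI simp: lookup_add algebra_simps)

abbreviation mon_poly :: "mon \<Rightarrow> 'k::field npoly" where
  "mon_poly m \<equiv> Poly_Mapping.single m 1"

lemma poly_expansion: "p = (\<Sum>t\<in>Poly_Mapping.keys p. Poly_Mapping.lookup p t \<cdot> mon_poly t)"
  by (rule poly_mapping_eqI)
     (auto simp: lookup_sum lookup_single when_def in_keys_iff sum.delta' if_distrib
           cong: if_cong)

lemma lookup_pmul:
  "Poly_Mapping.lookup (pmul p q) m =
     (case m of V i \<Rightarrow> 0 | M s t \<Rightarrow> Poly_Mapping.lookup p s * Poly_Mapping.lookup q t)"
proof (cases m)
  case (M s0 t0)
  have "Poly_Mapping.lookup (pmul p q) m = (\<Sum>s\<in>Poly_Mapping.keys p. \<Sum>t\<in>Poly_Mapping.keys q.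
          if s = s0 \<and> t = t0 then Poly_Mapping.lookup p s * Poly_Mapping.lookup q t else 0)"
    by (auto simp: pmul_def lookup_sum lookup_single when_def M intro!: sum.cong)
  also have "\<dots> = (\<Sum>s\<in>Poly_Mapping.keys p. if s = s0 then (\<Sum>t\<in>Poly_Mapping.keys q.
          if t = t0 then Poly_Mapping.lookup p s * Poly_Mapping.lookup q t else 0) else 0)"
    by (intro sum.cong refl) auto
  also have "\<dots> = Poly_Mapping.lookup p s0 * Poly_Mapping.lookup q t0"
    by (simp add: sum.delta' in_keys_iff)
  finally show ?thesis using M by simp
qed (simp add: pmul_def lookup_sum lookup_single)

lemma pmul_add_left: "pmul (p + q) r = pmul p r + pmul q r"
  and pmul_add_right: "pmul r (p + q) = pmul r p + pmul r q"
  and pmul_diff_left: "pmul (p - q) r = pmul p r - pmul q r"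
  and pmul_diff_right: "pmul r (p - q) = pmul r p - pmul r q"
  and pmul_scale_left: "pmul (c \<cdot> p) q = c \<cdot> pmul p q"
  and pmul_scale_right: "pmul p (c \<cdot> q) = c \<cdot> pmul p q"
  and pmul_zero_left [simp]: "pmul 0 q = 0"
  and pmul_zero_right [simp]: "pmul q 0 = 0"
  by (auto intro!: poly_mapping_eqI
      simp: lookup_pmul lookup_add lookup_minus algebra_simps split: mon.split)

lemma pmul_mon_poly: "pmul (mon_poly s) (mon_poly t) = (mon_poly (M s t) :: 'k::field npoly)"
  by (rule poly_mapping_eqI) (auto simp: lookup_pmul lookup_single when_def split: mon.split)

lemma pmul_sum_left: "pmul (\<Sum>i\<in>I. f i) q = (\<Sum>i\<in>I. pmul (f i) q)"
  by (induction I rule: infinite_finite_induct) (auto simp: pmul_add_left)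

lemma pmul_sum_right: "pmul q (\<Sum>i\<in>I. f i) = (\<Sum>i\<in>I. pmul q (f i))"
  by (induction I rule: infinite_finite_induct) (auto simp: pmul_add_right)

lemma psubst_sum_superset:
  assumes "finite S" "Poly_Mapping.keys p \<subseteq> S"
  shows "psubst \<sigma> p = (\<Sum>t\<in>S. Poly_Mapping.lookup p t \<cdot> tsubst \<sigma> t)"
  unfolding psubst_def
  by (rule sum.mono_neutral_left) (use assms in \<open>auto simp: in_keys_iff\<close>)

lemma psubst_add: "psubst \<sigma> (p + q) = psubst \<sigma> p + psubst \<sigma> q"
  using keys_add[of p q]
  by (subst (1 2 3) psubst_sum_superset[where S = "Poly_Mapping.keys p \<union> Poly_Mapping.keys q"])
     (auto simp: lookup_add free.scale_left_distrib sum.distrib)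

lemma psubst_scale: "psubst \<sigma> (c \<cdot> p) = c \<cdot> psubst \<sigma> p"
  by (subst (1 2) psubst_sum_superset[where S = "Poly_Mapping.keys p"])
     (auto simp: in_keys_iff free.scale_sum_right)

lemma psubst_zero [simp]: "psubst \<sigma> 0 = 0"
  by (simp add: psubst_def)

lemma psubst_diff: "psubst \<sigma> (p - q) = psubst \<sigma> p - psubst \<sigma> q"
  by (metis add_diff_cancel psubst_add diff_add_cancel)

lemma psubst_sum: "psubst \<sigma> (\<Sum>i\<in>I. f i) = (\<Sum>i\<in>I. psubst \<sigma> (f i))"
  by (induction I rule: infinite_finite_induct) (auto simp: psubst_add)

lemma psubst_single: "psubst \<sigma> (Poly_Mapping.single t c) = c \<cdot> tsubst \<sigma> t"
  by (subst psubst_sum_superset[where S = "{t}"]) auto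

lemma psubst_pmul: "psubst \<sigma> (pmul p q) = pmul (psubst \<sigma> p) (psubst \<sigma> q)"
proof -
  have "psubst \<sigma> (pmul p q) = (\<Sum>s\<in>Poly_Mapping.keys p. \<Sum>t\<in>Poly_Mapping.keys q.
          (Poly_Mapping.lookup p s * Poly_Mapping.lookup q t) \<cdot> pmul (tsubst \<sigma> s) (tsubst \<sigma> t))"
    by (simp add: pmul_def psubst_sum psubst_single)
  also have "\<dots> = pmul (psubst \<sigma> p) (psubst \<sigma> q)"
    unfolding psubst_def pmul_sum_left pmul_sum_right pmul_scale_left pmul_scale_right
      free.scale_sum_right free.scale_scale
    by (subst sum.swap) (simp add: mult.commute)
  finally show ?thesis .
qed

lemma psubst_X [simp]: "psubst \<sigma> (X i) = \<sigma> i"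
  by (simp add: X_def psubst_single)

lemma Asc_simps [simp]: "fst (Asc c v) = c * fst v" "snd (Asc c v) = c * snd v"
  by (simp_all add: Asc_def)

lemma Amul_simps [simp]:
  "fst (Amul \<pi> \<rho> u v) = 0"
  "snd (Amul \<pi> \<rho> u v) = (fst u + \<rho> * snd u) * (fst v + \<pi> * snd v)"
  by (simp_all add: Amul_def algebra_simps)

lemma Asc_add: "Asc c (u + v) = Asc c u + Asc c v"
  and Asc_add_left: "Asc (c + d) u = Asc c u + Asc d u"
  and Asc_zero [simp]: "Asc 0 u = 0" "Asc c 0 = 0"
  and Asc_Asc: "Asc c (Asc d u) = Asc (c * d) u"
  and Amul_add_left: "Amul \<pi> \<rho> (u + v) w = Amul \<pi> \<rho> u w + Amul \<pi> \<rho> v w"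
  and Amul_add_right: "Amul \<pi> \<rho> w (u + v) = Amul \<pi> \<rho> w u + Amul \<pi> \<rho> w v"
  and Amul_zero [simp]: "Amul \<pi> \<rho> 0 v = 0" "Amul \<pi> \<rho> v 0 = 0"
  and Amul_Asc_left: "Amul \<pi> \<rho> (Asc c u) v = Asc c (Amul \<pi> \<rho> u v)"
  and Amul_Asc_right: "Amul \<pi> \<rho> u (Asc c v) = Asc c (Amul \<pi> \<rho> u v)"
  by (simp_all add: prod_eq_iff algebra_simps)

lemma Asc_sum: "Asc c (\<Sum>i\<in>I. f i) = (\<Sum>i\<in>I. Asc c (f i))"
  by (induction I rule: infinite_finite_induct) (auto simp: Asc_add)

lemma Amul_sum_left: "Amul \<pi> \<rho> (\<Sum>i\<in>I. f i) v = (\<Sum>i\<in>I. Amul \<pi> \<rho> (f i) v)"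
  by (induction I rule: infinite_finite_induct) (auto simp: Amul_add_left)

lemma Amul_sum_right: "Amul \<pi> \<rho> v (\<Sum>i\<in>I. f i) = (\<Sum>i\<in>I. Amul \<pi> \<rho> v (f i))"
  by (induction I rule: infinite_finite_induct) (auto simp: Amul_add_right)

definition Aeval :: "'k::field \<Rightarrow> 'k \<Rightarrow> (nat \<Rightarrow> 'k \<times> 'k) \<Rightarrow> 'k npoly \<Rightarrow> 'k \<times> 'k" where
  "Aeval \<pi> \<rho> a p = (\<Sum>t\<in>Poly_Mapping.keys p. Asc (Poly_Mapping.lookup p t) (teval (Amul \<pi> \<rho>) a t))"

lemma IdA_eq: "IdA \<pi> \<rho> = {p. \<forall>a. Aeval \<pi> \<rho> a p = 0}"
  by (simp add: IdA_def Aeval_def zero_prod_def)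

lemma Aeval_sum_superset:
  assumes "finite S" "Poly_Mapping.keys p \<subseteq> S"
  shows "Aeval \<pi> \<rho> a p = (\<Sum>t\<in>S. Asc (Poly_Mapping.lookup p t) (teval (Amul \<pi> \<rho>) a t))"
  unfolding Aeval_def
  by (rule sum.mono_neutral_left) (use assms in \<open>auto simp: in_keys_iff\<close>)

lemma Aeval_add: "Aeval \<pi> \<rho> a (p + q) = Aeval \<pi> \<rho> a p + Aeval \<pi> \<rho> a q"
  using keys_add[of p q]
  by (subst (1 2 3) Aeval_sum_superset[where S = "Poly_Mapping.keys p \<union> Poly_Mapping.keys q"])
     (auto simp: lookup_add Asc_add_left sum.distrib)

lemma Aeval_scale: "Aeval \<pi> \<rho> a (c \<cdot> p) = Asc c (Aeval \<pi> \<rho> a p)"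
  by (subst (1 2) Aeval_sum_superset[where S = "Poly_Mapping.keys p"])
     (auto simp: in_keys_iff Asc_sum Asc_Asc)

lemma Aeval_zero [simp]: "Aeval \<pi> \<rho> a 0 = 0"
  by (simp add: Aeval_def)

lemma Aeval_diff: "Aeval \<pi> \<rho> a (p - q) = Aeval \<pi> \<rho> a p - Aeval \<pi> \<rho> a q"
  by (metis add_diff_cancel Aeval_add diff_add_cancel)

lemma Aeval_sum: "Aeval \<pi> \<rho> a (\<Sum>i\<in>I. f i) = (\<Sum>i\<in>I. Aeval \<pi> \<rho> a (f i))"
  by (induction I rule: infinite_finite_induct) (auto simp: Aeval_add)

lemma Aeval_single: "Aeval \<pi> \<rho> a (Poly_Mapping.single t c) = Asc c (teval (Amul \<pi> \<rho>) a t)"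
  by (subst Aeval_sum_superset[where S = "{t}"]) auto

lemma Aeval_pmul: "Aeval \<pi> \<rho> a (pmul p q) = Amul \<pi> \<rho> (Aeval \<pi> \<rho> a p) (Aeval \<pi> \<rho> a q)"
proof -
  have "Aeval \<pi> \<rho> a (pmul p q) = (\<Sum>s\<in>Poly_Mapping.keys p. \<Sum>t\<in>Poly_Mapping.keys q.
          Asc (Poly_Mapping.lookup p s * Poly_Mapping.lookup q t)
            (Amul \<pi> \<rho> (teval (Amul \<pi> \<rho>) a s) (teval (Amul \<pi> \<rho>) a t)))"
    by (simp add: pmul_def Aeval_sum Aeval_single)
  also have "\<dots> = Amul \<pi> \<rho> (Aeval \<pi> \<rho> a p) (Aeval \<pi> \<rho> a q)"
    unfolding Aeval_def Amul_sum_left Amul_sum_right Amul_Asc_left Amul_Asc_right Asc_Asc Asc_sum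
    by (subst sum.swap) (simp add: mult.commute)
  finally show ?thesis .
qed

lemma Aeval_psubst: "Aeval \<pi> \<rho> a (psubst \<sigma> p) = Aeval \<pi> \<rho> (\<lambda>i. Aeval \<pi> \<rho> a (\<sigma> i)) p"
proof -
  have "Aeval \<pi> \<rho> a (tsubst \<sigma> t) = teval (Amul \<pi> \<rho>) (\<lambda>i. Aeval \<pi> \<rho> a (\<sigma> i)) t" for t
    by (induction t) (auto simp: Aeval_pmul)
  then show ?thesis
    unfolding psubst_def Aeval_sum Aeval_scale by (simp add: Aeval_def)
qed

lemma Aeval_X [simp]: "Aeval \<pi> \<rho> a (X i) = a i"
  by (simp add: X_def Aeval_single prod_eq_iff)

lemma IdA_subspace: "free.subspace (IdA \<pi> \<rho>)"
  by (simp add: free.subspace_def IdA_eq Aeval_add Aeval_scale)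

lemma IdA_psubst: "p \<in> IdA \<pi> \<rho> \<Longrightarrow> psubst \<sigma> p \<in> IdA \<pi> \<rho>"
  by (simp add: IdA_eq Aeval_psubst)

lemma tideal_subset_IdA:
  assumes "S \<subseteq> IdA \<pi> \<rho>"
  shows "tideal S \<subseteq> IdA \<pi> \<rho>"
proof
  fix f assume "f \<in> tideal S"
  then show "f \<in> IdA \<pi> \<rho>"
    by induction (use assms in \<open>auto simp: IdA_eq Aeval_psubst Aeval_add Aeval_scale Aeval_pmul\<close>)
qed

lemma bicomm_ids_subset_IdA: "bicomm_ids \<subseteq> IdA \<pi> \<rho>"
  by (auto simp: bicomm_ids_def IdA_eq Aeval_pmul Aeval_diff prod_eq_iff algebra_simps)

lemma tideal_diff: "f \<in> tideal S \<Longrightarrow> g \<in> tideal S \<Longrightarrow> f - g \<in> tideal S"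
  using tideal.add[of f S "(-1) \<cdot> g"] tideal.scale[of g S "-1"]
  by (simp add: free.scale_minus_left)

lemma tideal_sum: "(\<And>i. i \<in> I \<Longrightarrow> f i \<in> tideal S) \<Longrightarrow> sum f I \<in> tideal S"
  by (induction I rule: infinite_finite_induct) (auto intro: tideal.zero tideal.add)

section \<open>Bicommutative monomials\<close>

inductive bicomm_eq :: "mon \<Rightarrow> mon \<Rightarrow> bool" where
  bicomm_refl: "bicomm_eq m m"
| bicomm_sym: "bicomm_eq a b \<Longrightarrow> bicomm_eq b a"
| bicomm_trans [trans]: "bicomm_eq a b \<Longrightarrow> bicomm_eq b c \<Longrightarrow> bicomm_eq a c"
| bicomm_cong_left: "bicomm_eq a b \<Longrightarrow> bicomm_eq (M a c) (M b c)"
| bicomm_cong_right: "bicomm_eq a b \<Longrightarrow> bicomm_eq (M c a) (M c b)"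
| bicomm_right_comm: "bicomm_eq (M (M a b) c) (M (M a c) b)"
| bicomm_left_comm: "bicomm_eq (M a (M b c)) (M b (M a c))"

lemma bicomm_eq_tideal:
  assumes "bicomm_ids \<subseteq> S" "bicomm_eq m m'"
  shows "(mon_poly m - mon_poly m' :: 'k::field npoly) \<in> tideal S"
  using assms(2)
proof induction
  case (bicomm_refl m)
  show ?case by (simp add: tideal.zero)
next
  case (bicomm_sym a b)
  then show ?case using tideal_diff[OF tideal.zero bicomm_sym.IH] by simp
next
  case (bicomm_trans a b c)
  then show ?case using tideal.add[OF bicomm_trans.IH] by simp
next
  case (bicomm_cong_left a b c)
  then show ?case using tideal.rmul[OF bicomm_cong_left.IH, of "mon_poly c"] by (simp add: pmul_diff_left pmul_mon_poly)
next
  case (bicomm_cong_right a b c)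
  then show ?case using tideal.lmul[OF bicomm_cong_right.IH, of "mon_poly c"] by (simp add: pmul_diff_right pmul_mon_poly)
next
  case (bicomm_right_comm a b c)
  define \<sigma> :: "nat \<Rightarrow> 'k npoly" where
    "\<sigma> i = mon_poly (if i = 1 then a else if i = 2 then b else c)" for i
  have "pmul (pmul (X 1) (X 2)) (X 3) - pmul (pmul (X 1) (X 3)) (X 2) \<in> S"
    using assms(1) by (auto simp: bicomm_ids_def)
  from tideal.gen[OF this, of \<sigma>] show ?case
    by (simp add: \<sigma>_def psubst_diff psubst_pmul pmul_mon_poly)
next
  case (bicomm_left_comm a b c)
  define \<sigma> :: "nat \<Rightarrow> 'k npoly" where
    "\<sigma> i = mon_poly (if i = 1 then a else if i = 2 then b else c)" for i
  have "pmul (X 1) (pmul (X 2) (X 3)) - pmul (X 2) (pmul (X 1) (X 3)) \<in> S"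
    using assms(1) by (auto simp: bicomm_ids_def)
  from tideal.gen[OF this, of \<sigma>] show ?case
    by (simp add: \<sigma>_def psubst_diff psubst_pmul pmul_mon_poly)
qed

lemma bicomm_eq_IdA: "bicomm_eq m m' \<Longrightarrow> (mon_poly m - mon_poly m' :: 'k::field npoly) \<in> IdA \<pi> \<rho>"
  using bicomm_eq_tideal[OF order_refl] tideal_subset_IdA[OF bicomm_ids_subset_IdA] by blast

lemma bicomm_eq_product_comm: "bicomm_eq (M (M x y) (M z w)) (M (M z w) (M x y))"
proof -
  have "bicomm_eq (M (M x y) (M z w)) (M (M z y) (M x w))" for x y z w
    by (meson bicomm_trans bicomm_right_comm bicomm_cong_left bicomm_left_comm)
  moreover have "bicomm_eq (M (M x y) (M z w)) (M (M x w) (M z y))" for x y z w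
    by (meson bicomm_trans bicomm_left_comm bicomm_cong_right bicomm_right_comm)
  ultimately show ?thesis by (meson bicomm_trans)
qed

lemma bicomm_eq_assoc_product: "bicomm_eq (M (M a (M u v)) d) (M a (M (M u v) d))"
  by (meson bicomm_trans bicomm_right_comm bicomm_eq_product_comm bicomm_left_comm)

text \<open>With \<open>ls = [l\<^sub>1, \<dots>, l\<^sub>k]\<close> and \<open>rs = [r\<^sub>1, \<dots>, r\<^sub>m]\<close>, \<open>canon ls rs\<close> is the monomial
  \<open>x\<^sub>l\<^sub>1(x\<^sub>l\<^sub>2(\<dots>(x\<^sub>l\<^sub>k x\<^sub>r\<^sub>m)\<dots>x\<^sub>r\<^sub>1))\<close>; the value for \<open>ls = []\<close> is junk.\<close>
fun left_normed :: "nat \<Rightarrow> nat list \<Rightarrow> mon" where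
  "left_normed l [] = V l"
| "left_normed l (r # rs) = M (left_normed l rs) (V r)"

fun canon :: "nat list \<Rightarrow> nat list \<Rightarrow> mon" where
  "canon [] rs = V 0"
| "canon [l] rs = left_normed l rs"
| "canon (l # l' # ls) rs = M (V l) (canon (l' # ls) rs)"

lemma canon_Cons: "ls \<noteq> [] \<Longrightarrow> canon (l # ls) rs = M (V l) (canon ls rs)"
  by (cases ls) auto

lemma left_normed_product: "rs \<noteq> [] \<Longrightarrow> \<exists>u v. left_normed l rs = M u v"
  by (cases rs) auto

lemma canon_product: "ls \<noteq> [] \<Longrightarrow> rs \<noteq> [] \<Longrightarrow> \<exists>u v. canon ls rs = M u v"
  by (induction ls rs rule: canon.induct) (auto simp: left_normed_product)

lemma canon_times_var:
  assumes "ls \<noteq> []" "rs \<noteq> []"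
  shows "bicomm_eq (M (canon ls rs) (V j)) (canon ls (j # rs))"
  using assms
proof (induction ls rs rule: canon.induct)
  case (3 l l' ls rs)
  obtain u v where uv: "canon (l' # ls) rs = M u v" using canon_product 3 by blast
  have "bicomm_eq (M (M (V l) (canon (l' # ls) rs)) (V j)) (M (V l) (M (canon (l' # ls) rs) (V j)))"
    using bicomm_eq_assoc_product[of "V l" u v "V j"] uv by simp
  with 3 show ?case by (auto intro: bicomm_trans bicomm_cong_right)
qed (auto intro: bicomm_refl)

lemma left_normed_times_canon:
  assumes "ls \<noteq> []" "rs \<noteq> []"
  shows "bicomm_eq (M (left_normed l rs') (canon ls rs)) (canon (l # ls) (rs' @ rs))"
proof (induction rs')
  case Nil
  show ?case using assms by (simp add: canon_Cons bicomm_refl)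
next
  case (Cons r rs')
  have "bicomm_eq (M (left_normed l (r # rs')) (canon ls rs)) (M (M (left_normed l rs') (canon ls rs)) (V r))"
    by (simp add: bicomm_right_comm)
  also have "bicomm_eq \<dots> (M (canon (l # ls) (rs' @ rs)) (V r))"
    using Cons by (rule bicomm_cong_left)
  also have "bicomm_eq \<dots> (canon (l # ls) (r # rs' @ rs))"
    using assms by (intro canon_times_var) auto
  finally show ?case by simp
qed

lemma canon_times_canon:
  assumes "ls \<noteq> []" "rs \<noteq> []" "ls' \<noteq> []" "rs' \<noteq> []"
  shows "bicomm_eq (M (canon ls rs) (canon ls' rs')) (canon (ls @ ls') (rs @ rs'))"
  using assms
proof (induction ls rs rule: canon.induct)
  case (2 l rs)
  then show ?case using left_normed_times_canon by simp
next
  case (3 l l' ls rs)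
  obtain u v where uv: "canon (l' # ls) rs = M u v" using canon_product 3 by blast
  have "bicomm_eq (M (M (V l) (canon (l' # ls) rs)) (canon ls' rs')) (M (V l) (M (canon (l' # ls) rs) (canon ls' rs')))"
    using bicomm_eq_assoc_product[of "V l" u v] uv by simp
  with 3 show ?case by (auto intro: bicomm_trans bicomm_cong_right)
qed auto

fun left_factors :: "mon \<Rightarrow> nat multiset" where
  "left_factors (V i) = {#}"
| "left_factors (M s t) = (case s of V i \<Rightarrow> {#i#} | M _ _ \<Rightarrow> left_factors s) + left_factors t"

fun right_factors :: "mon \<Rightarrow> nat multiset" where
  "right_factors (V i) = {#}"
| "right_factors (M s t) = right_factors s + (case t of V j \<Rightarrow> {#j#} | M _ _ \<Rightarrow> right_factors t)"

lemma bicomm_eq_canon_lists: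
  "\<exists>s t. m = M s t \<Longrightarrow> \<exists>ls rs. ls \<noteq> [] \<and> rs \<noteq> [] \<and> mset ls = left_factors m \<and> mset rs = right_factors m
     \<and> bicomm_eq m (canon ls rs)"
proof (induction m)
  case (M s t)
  consider (VV) i j where "s = V i" "t = V j" | (VM) i u v where "s = V i" "t = M u v"
    | (MV) s1 s2 j where "s = M s1 s2" "t = V j" | (MM) s1 s2 u v where "s = M s1 s2" "t = M u v"
    by (cases s; cases t) auto
  then show ?case
  proof cases
    case VV
    then show ?thesis by (intro exI[of _ "[i]"] exI[of _ "[j]"]) (auto intro: bicomm_refl)
  next
    case VM
    with M.IH(2) obtain ls rs where "ls \<noteq> []" "rs \<noteq> []" "mset ls = left_factors t"
      "mset rs = right_factors t" "bicomm_eq t (canon ls rs)" by blast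
    with VM show ?thesis
      by (intro exI[of _ "i # ls"] exI[of _ rs]) (auto simp: canon_Cons intro: bicomm_cong_right)
  next
    case MV
    with M.IH(1) obtain ls rs where *: "ls \<noteq> []" "rs \<noteq> []" "mset ls = left_factors s"
      "mset rs = right_factors s" "bicomm_eq s (canon ls rs)" by blast
    have "bicomm_eq (M s t) (canon ls (j # rs))"
      using bicomm_cong_left[OF *(5)] canon_times_var[OF *(1,2)] MV by (auto intro: bicomm_trans)
    with * MV show ?thesis by (intro exI[of _ ls] exI[of _ "j # rs"]) auto
  next
    case MM
    with M.IH obtain ls rs ls' rs' where *: "ls \<noteq> []" "rs \<noteq> []" "mset ls = left_factors s"
      "mset rs = right_factors s" "bicomm_eq s (canon ls rs)"
      and **: "ls' \<noteq> []" "rs' \<noteq> []" "mset ls' = left_factors t"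
      "mset rs' = right_factors t" "bicomm_eq t (canon ls' rs')" by blast
    have "bicomm_eq (M s t) (canon (ls @ ls') (rs @ rs'))"
      using bicomm_trans[OF bicomm_cong_left[OF *(5)] bicomm_cong_right[OF **(5)]]
        canon_times_canon[OF *(1,2) **(1,2)] by (auto intro: bicomm_trans)
    with * ** MM show ?thesis by (intro exI[of _ "ls @ ls'"] exI[of _ "rs @ rs'"]) auto
  qed
qed simp

lemma bicomm_eq_sort:
  assumes swap: "\<And>a b ys. bicomm_eq (f (a # b # ys)) (f (b # a # ys))"
    and cons: "\<And>x xs ys. bicomm_eq (f xs) (f ys) \<Longrightarrow> length xs = length ys \<Longrightarrow> bicomm_eq (f (x # xs)) (f (x # ys))"
  shows "bicomm_eq (f xs) (f (sort xs))"
proof -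
  have insort: "bicomm_eq (f (x # ys)) (f (insort x ys))" for x ys
  proof (induction ys)
    case (Cons y ys)
    have "bicomm_eq (f (x # y # ys)) (f (y # insort x ys))"
      using bicomm_trans[OF swap cons[OF Cons]] by (simp add: length_insort)
    then show ?case by (auto intro: bicomm_refl)
  qed (simp add: bicomm_refl)
  show ?thesis
  proof (induction xs)
    case (Cons x xs)
    show ?case
      using bicomm_trans[OF cons[OF Cons] insort] by simp
  qed (simp add: bicomm_refl)
qed

lemma left_normed_swap:
  assumes "rs \<noteq> []"
  shows "bicomm_eq (M (V a) (left_normed b rs)) (M (V b) (left_normed a rs))"
  using assms
proof (induction rs)
  case (Cons r rs)
  show ?case
  proof (cases "rs = []")
    case True
    then show ?thesis by (simp add: bicomm_left_comm)
  next
    case False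
    obtain u v u' v' where uv: "left_normed b rs = M u v" "left_normed a rs = M u' v'"
      using left_normed_product[OF False] by metis
    have "bicomm_eq (M (V a) (left_normed b (r # rs))) (M (M (V a) (left_normed b rs)) (V r))"
      using bicomm_sym[OF bicomm_eq_assoc_product[of "V a" u v "V r"]] uv by simp
    also have "bicomm_eq \<dots> (M (M (V b) (left_normed a rs)) (V r))"
      using Cons.IH[OF False] by (rule bicomm_cong_left)
    also have "bicomm_eq \<dots> (M (V b) (left_normed a (r # rs)))"
      using bicomm_eq_assoc_product[of "V b" u' v' "V r"] uv by simp
    finally show ?thesis .
  qed
qed simp

lemma bicomm_eq_sort_left:
  assumes "rs \<noteq> []"
  shows "bicomm_eq (canon ls rs) (canon (sort ls) rs)"
proof (rule bicomm_eq_sort)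
  show "bicomm_eq (canon (a # b # ys) rs) (canon (b # a # ys) rs)" for a b ys
    using left_normed_swap[OF assms] by (cases ys) (auto simp: bicomm_left_comm)
  show "bicomm_eq (canon (x # xs) rs) (canon (x # ys) rs)"
    if "bicomm_eq (canon xs rs) (canon ys rs)" "length xs = length ys" for x xs ys
    using that by (cases xs; cases ys) (auto simp: bicomm_refl intro: bicomm_cong_right)
qed

lemma bicomm_eq_sort_right:
  assumes "ls \<noteq> []"
  shows "bicomm_eq (canon ls rs) (canon ls (sort rs))"
proof -
  have "bicomm_eq (left_normed l rs) (left_normed l (sort rs))" for l
    by (rule bicomm_eq_sort) (auto simp: bicomm_right_comm intro: bicomm_cong_left)
  with assms show ?thesis
    by (induction ls rs rule: canon.induct) (auto intro: bicomm_cong_right)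
qed

definition canonical :: "nat multiset \<Rightarrow> nat multiset \<Rightarrow> mon" where
  "canonical L R = canon (sorted_list_of_multiset L) (sorted_list_of_multiset R)"

lemma length_sorted_list_of_multiset [simp]: "length (sorted_list_of_multiset A) = size A"
  by (metis mset_sorted_list_of_multiset size_mset)

lemma sorted_list_of_multiset_eq_Nil_iff [simp]: "sorted_list_of_multiset A = [] \<longleftrightarrow> A = {#}"
  by (metis mset_sorted_list_of_multiset mset_zero_iff)

lemma bicomm_eq_canonical:
  assumes "ls \<noteq> []" "rs \<noteq> []"
  shows "bicomm_eq (canon ls rs) (canonical (mset ls) (mset rs))"
proof -
  have "sort ls \<noteq> []"
    using assms(1) by (metis length_0_conv length_sort)
  then show ?thesis
    using bicomm_trans[OF bicomm_eq_sort_left[OF assms(2)] bicomm_eq_sort_right[of "sort ls"]]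
    by (simp add: canonical_def sorted_list_of_multiset_mset)
qed

theorem bicomm_normal_form:
  assumes "m = M s t"
  shows "bicomm_eq m (canonical (left_factors m) (right_factors m))"
    and "left_factors m \<noteq> {#}" "right_factors m \<noteq> {#}"
proof -
  obtain ls rs where *: "ls \<noteq> []" "rs \<noteq> []" "mset ls = left_factors m" "mset rs = right_factors m"
    "bicomm_eq m (canon ls rs)"
    using bicomm_eq_canon_lists assms by metis
  show "bicomm_eq m (canonical (left_factors m) (right_factors m))"
    using * bicomm_eq_canonical[OF *(1,2)] by (auto intro: bicomm_trans)
  show "left_factors m \<noteq> {#}" "right_factors m \<noteq> {#}"
    using * by auto
qed

lemma left_factors_plus_right_factors:
  "\<exists>s t. m = M s t \<Longrightarrow> left_factors m + right_factors m = mset (leaves m)"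
proof (induction m)
  case (M a b)
  let ?la = "case a of V i \<Rightarrow> {#i#} | M x y \<Rightarrow> left_factors a"
  let ?rb = "case b of V j \<Rightarrow> {#j#} | M x y \<Rightarrow> right_factors b"
  have "?la + right_factors a = mset (leaves a)"
    using M.IH(1) by (cases a) auto
  moreover have "left_factors b + ?rb = mset (leaves b)"
    using M.IH(2) by (cases b) auto
  moreover have "left_factors (M a b) + right_factors (M a b) = (?la + right_factors a) + (left_factors b + ?rb)"
    by (simp add: ac_simps)
  ultimately show ?case by simp
qed simp

lemma mset_leaves_canonical: "L \<noteq> {#} \<Longrightarrow> mset (leaves (canonical L R)) = L + R"
proof -
  have "mset (leaves (left_normed l rs)) = add_mset l (mset rs)" for l rs
    by (induction rs) auto
  then have "ls \<noteq> [] \<Longrightarrow> mset (leaves (canon ls rs)) = mset ls + mset rs" for ls rs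
    by (induction ls rs rule: canon.induct) auto
  then show "L \<noteq> {#} \<Longrightarrow> ?thesis"
    by (metis canonical_def mset_sorted_list_of_multiset mset_zero_iff)
qed

section \<open>Linear independence of monomial functions\<close>

lemma base_digits_unique:
  fixes B :: nat
  assumes "\<forall>k<N. d k < B" "\<forall>k<N. d' k < B" "(\<Sum>k<N. d k * B ^ k) = (\<Sum>k<N. d' k * B ^ k)"
  shows "\<forall>k<N. d k = d' k"
  using assms
proof (induction N arbitrary: d d')
  case (Suc N)
  have split: "(\<Sum>k<Suc N. f k * B ^ k) = f 0 + B * (\<Sum>k<N. f (Suc k) * B ^ k)" for f
    by (subst sum.lessThan_Suc_shift) (simp add: sum_distrib_left ac_simps)
  have "d 0 < B" "d' 0 < B"
    using Suc.prems(1,2) by auto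
  then have "d 0 = d' 0" and rest: "(\<Sum>k<N. d (Suc k) * B ^ k) = (\<Sum>k<N. d' (Suc k) * B ^ k)"
    using arg_cong[OF Suc.prems(3), of "\<lambda>s. s mod B"] arg_cong[OF Suc.prems(3), of "\<lambda>s. s div B"]
    unfolding split by simp_all
  moreover have "\<forall>k<N. d (Suc k) = d' (Suc k)"
    using Suc.IH[OF _ _ rest] Suc.prems(1,2) by simp
  ultimately show ?case
    by (auto simp: less_Suc_eq_0_disj)
qed simp

lemma prod_mset_eq_prod_count:
  fixes y :: "'i \<Rightarrow> 'a::comm_monoid_mult"
  shows "set_mset x \<subseteq> A \<Longrightarrow> finite A \<Longrightarrow> (\<Prod>i\<in>#x. y i) = (\<Prod>i\<in>A. y i ^ count x i)"
proof (induction x)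
  case (add a x)
  then have "(\<Prod>i\<in>A. y i ^ count (add_mset a x) i) = (\<Prod>i\<in>A. y i ^ count x i * (if i = a then y i else 1))"
    by (intro prod.cong) (auto simp: mult.commute)
  with add show ?case
    by (simp add: prod.distrib prod.delta' mult.commute)
qed simp

text \<open>Kronecker substitution \<open>y\<^sub>i = t\<^bsup>B\<^sup>i\<^esup>\<close> turns the monomials into distinct powers of \<open>t\<close>.\<close>
lemma prod_mset_functions_independent:
  fixes c :: "nat multiset \<Rightarrow> 'k::{idom,ring_char_0}"
  assumes D: "finite D" and zero: "\<And>y. (\<Sum>x\<in>D. c x * (\<Prod>i\<in>#x. y i)) = 0"
  shows "\<forall>x\<in>D. c x = 0"
proof -
  obtain N where N: "\<And>x. x \<in> D \<Longrightarrow> set_mset x \<subseteq> {..<N}"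
    using D finite_nat_iff_bounded[of "\<Union>x\<in>D. set_mset x"] by auto
  define B where "B = Suc (\<Sum>x\<in>D. size x)"
  have count_less: "count x i < B" if "x \<in> D" for x i
    using count_le_size[of x i] member_le_sum[OF that, of size] D by (simp add: B_def)
  define E where "E x = (\<Sum>i<N. count x i * B ^ i)" for x
  have "inj_on E D"
  proof (rule inj_onI)
    fix x x' assume "x \<in> D" "x' \<in> D" "E x = E x'"
    then have "\<forall>i<N. count x i = count x' i"
      using count_less by (intro base_digits_unique[where B = B]) (auto simp: E_def)
    moreover have "count x i = 0" "count x' i = 0" if "i \<ge> N" for i
      using N[OF \<open>x \<in> D\<close>] N[OF \<open>x' \<in> D\<close>] that by (auto simp: count_eq_zero_iff)
    ultimately show "x = x'"
      by (metis multiset_eqI not_le)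
  qed
  define P where "P = (\<Sum>x\<in>D. monom (c x) (E x))"
  have "poly P t = 0" for t
  proof -
    have "t ^ E x = (\<Prod>i\<in>#x. t ^ B ^ i)" if "x \<in> D" for x
      using prod_mset_eq_prod_count[OF N[OF that], of "\<lambda>i. t ^ B ^ i"]
      by (simp add: E_def power_sum mult.commute flip: power_mult)
    then have "poly P t = (\<Sum>x\<in>D. c x * (\<Prod>i\<in>#x. t ^ B ^ i))"
      by (simp add: P_def poly_sum poly_monom)
    then show ?thesis
      using zero by simp
  qed
  then have "P = 0"
    using poly_all_0_iff_0 by blast
  show ?thesis
  proof
    fix x0 assume "x0 \<in> D"
    have "coeff P (E x0) = (\<Sum>x\<in>D. if x = x0 then c x else 0)"
      unfolding P_def coeff_sum coeff_monom
      by (intro sum.cong refl) (use \<open>inj_on E D\<close> \<open>x0 \<in> D\<close> in \<open>auto dest: inj_onD\<close>)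
    with \<open>P = 0\<close> \<open>x0 \<in> D\<close> D show "c x0 = 0"
      by simp
  qed
qed

lemma prod_mset_pair_functions_independent:
  fixes c :: "nat multiset \<times> nat multiset \<Rightarrow> 'k::{idom,ring_char_0}"
  assumes D: "finite D"
    and zero: "\<And>y z. (\<Sum>x\<in>D. c x * (\<Prod>i\<in>#fst x. y i) * (\<Prod>i\<in>#snd x. z i)) = 0"
  shows "\<forall>x\<in>D. c x = 0"
proof -
  define enc :: "nat multiset \<times> nat multiset \<Rightarrow> nat multiset" where "enc x = image_mset (\<lambda>i. 2 * i) (fst x) + image_mset (\<lambda>i. 2 * i + 1) (snd x)" for x
  have "inj enc"
  proof (rule injI)
    fix x x' assume "enc x = enc x'"
    then have "image_mset (\<lambda>k. k div 2) (filter_mset even (enc x)) = image_mset (\<lambda>k. k div 2) (filter_mset even (enc x'))"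
      and "image_mset (\<lambda>k. k div 2) (filter_mset odd (enc x)) = image_mset (\<lambda>k. k div 2) (filter_mset odd (enc x'))"
      by simp_all
    then show "x = x'"
      by (simp add: enc_def filter_mset_image_mset image_mset.compositionality o_def prod_eq_iff)
  qed
  have "\<forall>m\<in>enc ` D. c (inv enc m) = 0"
  proof (rule prod_mset_functions_independent)
    fix w :: "nat \<Rightarrow> 'k"
    have "(\<Prod>i\<in>#enc x. w i) = (\<Prod>i\<in>#fst x. w (2 * i)) * (\<Prod>i\<in>#snd x. w (2 * i + 1))" for x
      by (simp add: enc_def image_mset.compositionality o_def)
    then show "(\<Sum>m\<in>enc ` D. c (inv enc m) * (\<Prod>i\<in>#m. w i)) = 0"
      using zero[of "\<lambda>i. w (2 * i)" "\<lambda>i. w (2 * i + 1)"]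
      by (simp add: sum.reindex inj_on_subset[OF \<open>inj enc\<close>] \<open>inj enc\<close> mult.assoc)
  qed (use D in simp)
  with \<open>inj enc\<close> show ?thesis
    by simp
qed

definition left_form :: "'k::field \<Rightarrow> 'k \<times> 'k \<Rightarrow> 'k" where
  "left_form \<rho> u = fst u + \<rho> * snd u"

definition right_form :: "'k::field \<Rightarrow> 'k \<times> 'k \<Rightarrow> 'k" where
  "right_form \<pi> v = fst v + \<pi> * snd v"

definition canon_weight :: "'k::field \<Rightarrow> 'k \<Rightarrow> nat multiset \<Rightarrow> nat multiset \<Rightarrow> 'k" where
  "canon_weight \<pi> \<rho> L R = \<pi> ^ (size L - 1) * \<rho> ^ (size R - 1)"

lemma teval_left_normed:
  "rs \<noteq> [] \<Longrightarrow> teval (Amul \<pi> \<rho>) a (left_normed l rs) =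
     (0, \<rho> ^ (length rs - 1) * left_form \<rho> (a l) * (\<Prod>r\<leftarrow>rs. right_form \<pi> (a r)))"
proof (induction rs)
  case (Cons r rs)
  then show ?case
    by (cases rs) (auto simp: prod_eq_iff left_form_def right_form_def algebra_simps)
qed simp

lemma teval_canon:
  "ls \<noteq> [] \<Longrightarrow> rs \<noteq> [] \<Longrightarrow> teval (Amul \<pi> \<rho>) a (canon ls rs) =
     (0, \<pi> ^ (length ls - 1) * \<rho> ^ (length rs - 1) * (\<Prod>l\<leftarrow>ls. left_form \<rho> (a l))
          * (\<Prod>r\<leftarrow>rs. right_form \<pi> (a r)))"
  by (induction ls rs rule: canon.induct)
     (auto simp: teval_left_normed prod_eq_iff left_form_def right_form_def algebra_simps)

lemma teval_canonical:
  assumes "L \<noteq> {#}" "R \<noteq> {#}"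
  shows "teval (Amul \<pi> \<rho>) a (canonical L R) =
     (0, canon_weight \<pi> \<rho> L R * (\<Prod>l\<in>#L. left_form \<rho> (a l)) * (\<Prod>r\<in>#R. right_form \<pi> (a r)))"
proof -
  have "(\<Prod>i\<leftarrow>sorted_list_of_multiset A. f i) = (\<Prod>i\<in>#A. f i)" for A :: "nat multiset" and f :: "nat \<Rightarrow> 'a"
    by (metis mset_map mset_sorted_list_of_multiset prod_mset_prod_list)
  then show ?thesis
    using assms by (simp add: canonical_def canon_weight_def teval_canon)
qed

lemma canonical_IdA_combination:
  fixes \<pi> \<rho> :: "'k::field_char_0"
  assumes "\<pi> \<noteq> \<rho>" "finite D" "\<And>x. x \<in> D \<Longrightarrow> fst x \<noteq> {#} \<and> snd x \<noteq> {#}"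
    and "(\<Sum>x\<in>D. d x \<cdot> mon_poly (canonical (fst x) (snd x))) \<in> IdA \<pi> \<rho>"
  shows "\<forall>x\<in>D. d x * canon_weight \<pi> \<rho> (fst x) (snd x) = 0"
proof (rule prod_mset_pair_functions_independent[OF assms(2)])
  fix y z :: "nat \<Rightarrow> 'k"
  text \<open>As \<open>\<pi> \<noteq> \<rho>\<close>, the values of the two linear forms can be prescribed independently.\<close>
  define u where "u j = (z j - y j) / (\<pi> - \<rho>)" for j
  define a where "a j = (y j - \<rho> * u j, u j)" for j
  have "(\<pi> - \<rho>) * u j = z j - y j" for j
    using assms(1) by (simp add: u_def)
  then have forms: "left_form \<rho> (a j) = y j" "right_form \<pi> (a j) = z j" for j
    by (simp_all add: a_def left_form_def right_form_def algebra_simps)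
  have "0 = snd (Aeval \<pi> \<rho> a (\<Sum>x\<in>D. d x \<cdot> mon_poly (canonical (fst x) (snd x))))"
    using assms(4) by (simp add: IdA_eq)
  also have "\<dots> = (\<Sum>x\<in>D. d x * canon_weight \<pi> \<rho> (fst x) (snd x)
                      * (\<Prod>i\<in>#fst x. y i) * (\<Prod>i\<in>#snd x. z i))"
    unfolding Aeval_sum Aeval_scale Aeval_single snd_sum
    by (intro sum.cong refl) (simp add: assms(3) teval_canonical forms)
  finally show "(\<Sum>x\<in>D. d x * canon_weight \<pi> \<rho> (fst x) (snd x)
                   * (\<Prod>i\<in>#fst x. y i) * (\<Prod>i\<in>#snd x. z i)) = 0" ..
qed

lemma canonical_in_IdA_iff:
  fixes \<pi> \<rho> :: "'k::field_char_0"
  assumes "\<pi> \<noteq> \<rho>" "L \<noteq> {#}" "R \<noteq> {#}"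
  shows "mon_poly (canonical L R) \<in> IdA \<pi> \<rho> \<longleftrightarrow> canon_weight \<pi> \<rho> L R = 0"
proof
  assume "mon_poly (canonical L R) \<in> IdA \<pi> \<rho>"
  then show "canon_weight \<pi> \<rho> L R = 0"
    using canonical_IdA_combination[OF assms(1), of "{(L, R)}" "\<lambda>_. 1"] assms(2,3) by simp
qed (simp add: IdA_eq Aeval_single teval_canonical assms(2,3) prod_eq_iff)

section \<open>Generators of the identities\<close>

lemma IdA_lookup_var:
  assumes "p \<in> IdA \<pi> \<rho>"
  shows "Poly_Mapping.lookup p (V i) = 0"
proof -
  define a :: "nat \<Rightarrow> 'a \<times> 'a" where "a j = (if j = i then (1, 0) else (0, 0))" for j
  have "fst (teval (Amul \<pi> \<rho>) a t) = (if t = V i then 1 else 0)" for t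
    by (cases t) (auto simp: a_def)
  then have "fst (Aeval \<pi> \<rho> a p) = (\<Sum>t\<in>Poly_Mapping.keys p. if t = V i then Poly_Mapping.lookup p t else 0)"
    unfolding Aeval_def fst_sum by (intro sum.cong) auto
  also have "\<dots> = Poly_Mapping.lookup p (V i)"
    by (simp add: sum.delta in_keys_iff)
  finally show ?thesis
    using assms by (simp add: IdA_eq)
qed

lemma tideal_canonical_representative:
  assumes "bicomm_ids \<subseteq> S" "\<And>i. Poly_Mapping.lookup p (V i) = 0"
  obtains D d where "finite D" "\<And>x. x \<in> D \<Longrightarrow> fst x \<noteq> {#} \<and> snd x \<noteq> {#}"
    "p - (\<Sum>x\<in>D. d x \<cdot> mon_poly (canonical (fst x) (snd x))) \<in> tideal S"
proof
  define K where "K = Poly_Mapping.keys p"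
  define cls where "cls t = (left_factors t, right_factors t)" for t
  define D where "D = cls ` K"
  define d where "d x = (\<Sum>t\<in>{t\<in>K. cls t = x}. Poly_Mapping.lookup p t)" for x
  have products: "\<exists>s u. t = M s u" if "t \<in> K" for t
    using assms(2) that by (cases t) (auto simp: K_def in_keys_iff)
  show "finite D"
    by (simp add: D_def K_def)
  show "fst x \<noteq> {#} \<and> snd x \<noteq> {#}" if "x \<in> D" for x
  proof -
    obtain t where "t \<in> K" "x = cls t"
      using \<open>x \<in> D\<close> by (auto simp: D_def)
    moreover obtain s u where "t = M s u"
      using products[OF \<open>t \<in> K\<close>] by blast
    ultimately show ?thesis
      using bicomm_normal_form(2,3) by (simp add: cls_def)
  qed
  have "(\<Sum>x\<in>D. d x \<cdot> mon_poly (canonical (fst x) (snd x)))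
      = (\<Sum>x\<in>D. \<Sum>t\<in>{t\<in>K. cls t = x}. Poly_Mapping.lookup p t \<cdot> mon_poly (canonical (fst (cls t)) (snd (cls t))))"
    by (simp add: d_def free.scale_sum_left)
  also have "\<dots> = (\<Sum>t\<in>K. Poly_Mapping.lookup p t \<cdot> mon_poly (canonical (left_factors t) (right_factors t)))"
    by (subst sum.group) (auto simp: D_def K_def cls_def)
  finally have "p - (\<Sum>x\<in>D. d x \<cdot> mon_poly (canonical (fst x) (snd x)))
      = (\<Sum>t\<in>K. Poly_Mapping.lookup p t \<cdot> (mon_poly t - mon_poly (canonical (left_factors t) (right_factors t))))"
    by (subst (1) poly_expansion) (simp add: K_def sum_subtractf free.scale_right_diff_distrib)
  also have "\<dots> \<in> tideal S"
    using products by (intro tideal_sum tideal.scale bicomm_eq_tideal[OF assms(1)])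
      (auto intro: bicomm_normal_form(1))
  finally show "p - (\<Sum>x\<in>D. d x \<cdot> mon_poly (canonical (fst x) (snd x))) \<in> tideal S" .
qed

theorem IdA_eq_tideal:
  fixes \<pi> \<rho> :: "'k::field_char_0"
  assumes "\<pi> \<noteq> \<rho>" and bicomm: "bicomm_ids \<subseteq> S" and sound: "S \<subseteq> IdA \<pi> \<rho>"
    and vanishing: "\<And>L R. L \<noteq> {#} \<Longrightarrow> R \<noteq> {#} \<Longrightarrow> canon_weight \<pi> \<rho> L R = 0 \<Longrightarrow>
                       mon_poly (canonical L R) \<in> tideal S"
  shows "IdA \<pi> \<rho> = tideal S"
proof
  show "tideal S \<subseteq> IdA \<pi> \<rho>"
    using sound by (rule tideal_subset_IdA)
  show "IdA \<pi> \<rho> \<subseteq> tideal S"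
  proof
    fix p assume p: "p \<in> IdA \<pi> \<rho>"
    obtain D d where D: "finite D" "\<And>x. x \<in> D \<Longrightarrow> fst x \<noteq> {#} \<and> snd x \<noteq> {#}"
      and rest: "p - (\<Sum>x\<in>D. d x \<cdot> mon_poly (canonical (fst x) (snd x))) \<in> tideal S"
      using tideal_canonical_representative[OF bicomm IdA_lookup_var[OF p]] by blast
    let ?q = "\<Sum>x\<in>D. d x \<cdot> mon_poly (canonical (fst x) (snd x))"
    have "?q \<in> IdA \<pi> \<rho>"
      using free.subspace_diff[OF IdA_subspace p, of "p - ?q"] rest tideal_subset_IdA[OF sound] by auto
    then have weights: "\<forall>x\<in>D. d x * canon_weight \<pi> \<rho> (fst x) (snd x) = 0"
      by (intro canonical_IdA_combination[OF assms(1) D])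
    have "?q \<in> tideal S"
    proof (rule tideal_sum)
      fix x assume "x \<in> D"
      show "d x \<cdot> mon_poly (canonical (fst x) (snd x)) \<in> tideal S"
      proof (cases "d x = 0")
        case False
        with \<open>x \<in> D\<close> weights have "canon_weight \<pi> \<rho> (fst x) (snd x) = 0"
          by auto
        with \<open>x \<in> D\<close> D(2) show ?thesis
          by (intro tideal.scale vanishing) auto
      qed (simp add: tideal.zero)
    qed
    then show "p \<in> tideal S"
      using tideal.add[OF rest] by fastforce
  qed
qed

lemma IdA_0_1: "IdA (0::'k::field_char_0) 1 = tideal (bicomm_ids \<union> {pmul (X 1) (pmul (X 2) (X 3))})"
proof (rule IdA_eq_tideal)
  show "bicomm_ids \<union> {pmul (X 1) (pmul (X 2) (X 3))} \<subseteq> IdA (0::'k) 1"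
    using bicomm_ids_subset_IdA by (auto simp: IdA_eq Aeval_pmul prod_eq_iff)
  fix L R :: "nat multiset"
  assume "L \<noteq> {#}" "R \<noteq> {#}" "canon_weight (0::'k) 1 L R = 0"
  then have "length (sorted_list_of_multiset L) \<ge> 2" and rs: "sorted_list_of_multiset R \<noteq> []"
    by ((cases "size L"), auto simp: canon_weight_def)+
  then obtain l l' ls where ls: "sorted_list_of_multiset L = l # l' # ls"
    by (metis Suc_le_length_iff numeral_2_eq_2)
  obtain u v where "canon (l' # ls) (sorted_list_of_multiset R) = M u v"
    using canon_product[OF _ rs] by blast
  then have "canonical L R = M (V l) (M u v)"
    by (simp add: canonical_def ls)
  moreover have "psubst (\<lambda>i. mon_poly (if i = 1 then V l else if i = 2 then u else v))
      (pmul (X 1) (pmul (X 2) (X 3))) \<in> tideal (bicomm_ids \<union> {pmul (X 1) (pmul (X 2) (X 3))})"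
    by (rule tideal.gen) simp
  ultimately show "mon_poly (canonical L R) \<in> tideal (bicomm_ids \<union> {pmul (X 1) (pmul (X 2) (X 3))})"
    by (simp add: psubst_pmul pmul_mon_poly)
qed auto

lemma canon_in_tideal:
  assumes "pmul (pmul (X 1) (X 2)) (X 3) \<in> S" "ls \<noteq> []"
  shows "mon_poly (canon ls (r # r' # rs)) \<in> tideal S"
  using assms(2)
proof (induction ls "r # r' # rs" rule: canon.induct)
  case (2 l)
  have "psubst (\<lambda>i. mon_poly (if i = 1 then left_normed l rs else if i = 2 then V r' else V r))
      (pmul (pmul (X 1) (X 2)) (X 3)) \<in> tideal S"
    using assms(1) by (rule tideal.gen)
  then show ?case
    by (simp add: psubst_pmul pmul_mon_poly)
next
  case (3 l l' ls)
  then show ?case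
    by (simp add: tideal.lmul flip: pmul_mon_poly)
qed simp

lemma IdA_1_0: "IdA (1::'k::field_char_0) 0 = tideal (bicomm_ids \<union> {pmul (pmul (X 1) (X 2)) (X 3)})"
proof (rule IdA_eq_tideal)
  show "bicomm_ids \<union> {pmul (pmul (X 1) (X 2)) (X 3)} \<subseteq> IdA (1::'k) 0"
    using bicomm_ids_subset_IdA by (auto simp: IdA_eq Aeval_pmul prod_eq_iff)
  fix L R :: "nat multiset"
  assume "L \<noteq> {#}" "R \<noteq> {#}" "canon_weight (1::'k) 0 L R = 0"
  then have "length (sorted_list_of_multiset R) \<ge> 2" and "sorted_list_of_multiset L \<noteq> []"
    by ((cases "size R"), auto simp: canon_weight_def)+
  then show "mon_poly (canonical L R) \<in> tideal (bicomm_ids \<union> {pmul (pmul (X 1) (X 2)) (X 3)})"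
    unfolding canonical_def by (metis Suc_le_length_iff numeral_2_eq_2 canon_in_tideal UnI2 singletonI)
qed auto

lemma IdA_1_minus_1: "IdA (1::'k::field_char_0) (-1) = tideal bicomm_ids"
  by (rule IdA_eq_tideal) (auto simp: bicomm_ids_subset_IdA canon_weight_def)

section \<open>Traces on a quotient\<close>

definition basis_trace :: "('a::field \<Rightarrow> 'b::ab_group_add \<Rightarrow> 'b) \<Rightarrow> 'b set \<Rightarrow> ('b \<Rightarrow> 'b) \<Rightarrow> 'a" where
  "basis_trace scale B f = (\<Sum>b\<in>B. module.representation scale B (f b) b)"

context vector_space
begin

lemma basis_trace_eq:
  assumes B: "independent B" "finite B" and B': "independent B'" "finite B'"
    and span_eq: "span B = span B'"
    and f: "Vector_Spaces.linear scale scale f" "\<And>x. x \<in> span B \<Longrightarrow> f x \<in> span B"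
  shows "basis_trace scale B f = basis_trace scale B' f"
proof -
  interpret f: Vector_Spaces.linear scale scale f by (fact f(1))
  let ?R = "representation B" and ?R' = "representation B'"
  have in_span: "b \<in> span B" "b \<in> span B'" if "b \<in> B \<or> b \<in> B'" for b
    using that span_eq by (auto intro: span_base)
  have change: "?R v b = (\<Sum>b'\<in>B'. ?R' v b' * ?R b' b)" if "v \<in> span B" for v b
  proof -
    have "?R v = ?R (\<Sum>b'\<in>B'. ?R' v b' *s b')"
      using sum_representation_eq[OF B'(1) _ B'(2)] that span_eq by simp
    also have "\<dots> = (\<lambda>b. \<Sum>b'\<in>B'. ?R' v b' * ?R b' b)"
      using in_span by (simp add: representation_sum[OF B(1)] span_scale representation_scale[OF B(1)])
    finally show ?thesis by simp
  qed
  have "basis_trace scale B f = (\<Sum>b'\<in>B'. \<Sum>b\<in>B. ?R b' b * ?R' (f b) b')"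
    unfolding basis_trace_def using in_span f(2)
    by (subst sum.swap) (simp add: change mult.commute)
  also have "\<dots> = (\<Sum>b'\<in>B'. ?R' (\<Sum>b\<in>B. ?R b' b *s f b) b')"
    using in_span f(2) span_eq
    by (simp add: representation_sum[OF B'(1)] span_scale representation_scale[OF B'(1)])
  also have "\<dots> = (\<Sum>b'\<in>B'. ?R' (f b') b')"
  proof (intro sum.cong refl)
    fix b' assume "b' \<in> B'"
    then have "f b' = f (\<Sum>b\<in>B. ?R b' b *s b)"
      using sum_representation_eq[OF B(1) in_span(1) B(2)] by simp
    then show "?R' (\<Sum>b\<in>B. ?R b' b *s f b) b' = ?R' (f b') b'"
      by (simp add: f.sum f.scale)
  qed
  finally show ?thesis
    by (simp add: basis_trace_def)
qed


lemma independent_quotient_extension: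
  assumes B0: "independent B0" "finite B0" and J: "finite J"
    and ind: "\<And>c. (\<Sum>j\<in>J. c j *s u j) \<in> span B0 \<Longrightarrow> \<forall>j\<in>J. c j = 0"
  shows "inj_on u J" "B0 \<inter> u ` J = {}" "independent (B0 \<union> u ` J)"
proof -
  have delta: "(\<Sum>i\<in>J. (if i = j then 1 else 0) *s u i) = u j" if "j \<in> J" for j
    using J that by (simp add: if_distrib[of "\<lambda>c. c *s _"] sum.delta cong: if_cong)
  have outside: "u j \<notin> span B0" if "j \<in> J" for j
  proof
    assume "u j \<in> span B0"
    then show False
      using ind[of "\<lambda>i. if i = j then 1 else 0"] delta[OF that] that by auto
  qed
  show "inj_on u J"
  proof (rule inj_onI, rule ccontr)
    fix j k assume jk: "j \<in> J" "k \<in> J" "u j = u k" "j \<noteq> k"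
    let ?c = "\<lambda>i. (if i = j then 1 else 0) - (if i = k then 1 else 0)"
    have "(\<Sum>i\<in>J. ?c i *s u i) = 0"
      using delta[OF jk(1)] delta[OF jk(2)] jk(3) by (simp add: scale_left_diff_distrib sum_subtractf)
    then show False
      using ind[of ?c] jk by (auto simp: span_zero)
  qed
  show disjoint: "B0 \<inter> u ` J = {}"
    using outside span_base by blast
  show "independent (B0 \<union> u ` J)"
  proof (rule independent_if_scalars_zero)
    show "finite (B0 \<union> u ` J)"
      using B0 J by simp
    fix g x assume zero: "(\<Sum>x\<in>B0 \<union> u ` J. g x *s x) = 0" and x: "x \<in> B0 \<union> u ` J"
    have split: "(\<Sum>x\<in>B0 \<union> u ` J. g x *s x) = (\<Sum>x\<in>B0. g x *s x) + (\<Sum>j\<in>J. g (u j) *s u j)"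
      using B0(2) J disjoint \<open>inj_on u J\<close> by (simp add: sum.union_disjoint sum.reindex)
    then have "(\<Sum>j\<in>J. g (u j) *s u j) = - (\<Sum>x\<in>B0. g x *s x)"
      using zero by (simp add: eq_neg_iff_add_eq_0 add.commute)
    then have "(\<Sum>j\<in>J. g (u j) *s u j) \<in> span B0"
      by (simp add: span_neg span_sum span_scale span_base)
    then have on_J: "\<forall>j\<in>J. g (u j) = 0"
      by (rule ind)
    then have "(\<Sum>x\<in>B0. g x *s x) = 0"
      using zero split by simp
    then have "\<forall>x\<in>B0. g x = 0"
      using B0 dependent_finite by blast
    with on_J x show "g x = 0"
      by blast
  qed
qed

lemma basis_trace_quotient_extension:
  assumes B0: "independent B0" "finite B0" and J: "finite J"
    and ind: "\<And>c. (\<Sum>j\<in>J. c j *s u j) \<in> span B0 \<Longrightarrow> \<forall>j\<in>J. c j = 0"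
    and f: "\<And>x. x \<in> span B0 \<Longrightarrow> f x \<in> span B0"
    and perm: "\<And>j. j \<in> J \<Longrightarrow> \<tau> j \<in> J \<and> f (u j) - u (\<tau> j) \<in> span B0"
  shows "basis_trace scale (B0 \<union> u ` J) f = basis_trace scale B0 f + of_nat (card {j\<in>J. \<tau> j = j})"
proof -
  note ext = independent_quotient_extension[OF B0 J ind]
  let ?B1 = "B0 \<union> u ` J"
  have "(\<Sum>b\<in>B0. representation ?B1 (f b) b) = basis_trace scale B0 f"
    unfolding basis_trace_def
    by (intro sum.cong refl) (simp add: representation_extend[OF ext(3) f[OF span_base] Un_upper1])
  moreover have "representation ?B1 (f (u j)) (u j) = (if \<tau> j = j then 1 else 0)" if "j \<in> J" for j
  proof -
    define w where "w = f (u j) - u (\<tau> j)"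
    have w: "w \<in> span B0"
      using perm[OF that] by (simp add: w_def)
    have "u (\<tau> j) \<in> ?B1"
      using perm[OF that] by blast
    have "w \<in> span ?B1"
      using w span_mono[of B0 ?B1] by auto
    have "f (u j) = u (\<tau> j) + w"
      by (simp add: w_def)
    then have "representation ?B1 (f (u j)) (u j) = representation ?B1 (u (\<tau> j)) (u j) + representation ?B1 w (u j)"
      using representation_add[OF ext(3) \<open>w \<in> span ?B1\<close> span_base[OF \<open>u (\<tau> j) \<in> ?B1\<close>]] by simp
    also have "representation ?B1 w = representation B0 w"
      by (rule representation_extend[OF ext(3) w Un_upper1])
    also have "representation B0 w (u j) = 0"
      using representation_ne_zero[of B0 w "u j"] ext(2) that by blast
    also have "representation ?B1 (u (\<tau> j)) (u j) = (if \<tau> j = j then 1 else 0)"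
      using \<open>u (\<tau> j) \<in> ?B1\<close> inj_onD[OF ext(1)] that perm[OF that]
      by (auto simp: representation_basis[OF ext(3)])
    finally show ?thesis by simp
  qed
  then have "(\<Sum>b\<in>u ` J. representation ?B1 (f b) b) = of_nat (card {j\<in>J. \<tau> j = j})"
    using J by (simp add: sum.reindex[OF ext(1)] sum.If_cases Int_def)
  ultimately show ?thesis
    unfolding basis_trace_def using B0(2) J ext(2) by (simp add: sum.union_disjoint)
qed


lemma span_quotient_extension:
  assumes "span B0 \<subseteq> span B" "u ` J \<subseteq> span B"
    and spanning: "\<And>w. w \<in> span B \<Longrightarrow> \<exists>v\<in>span (u ` J). w - v \<in> span B0"
  shows "span (B0 \<union> u ` J) = span B"
proof (unfold span_eq, intro conjI subsetI)
  show "x \<in> span B" if "x \<in> B0 \<union> u ` J" for x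
    using that assms(1,2) span_base by blast
  fix w assume "w \<in> B"
  then obtain v where v: "v \<in> span (u ` J)" "w - v \<in> span B0"
    using spanning span_base by blast
  then have "v \<in> span (B0 \<union> u ` J)" "w - v \<in> span (B0 \<union> u ` J)"
    using span_mono[of "u ` J" "B0 \<union> u ` J"] span_mono[of B0 "B0 \<union> u ` J"] by auto
  then have "v + (w - v) \<in> span (B0 \<union> u ` J)"
    by (rule span_add)
  then show "w \<in> span (B0 \<union> u ` J)"
    by simp
qed

lemma span_quotient_extension_invariant:
  assumes f: "Vector_Spaces.linear scale scale f" "\<And>x. x \<in> span B0 \<Longrightarrow> f x \<in> span B0"
    and perm: "\<And>j. j \<in> J \<Longrightarrow> \<tau> j \<in> J \<and> f (u j) - u (\<tau> j) \<in> span B0"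
    and x: "x \<in> span (B0 \<union> u ` J)"
  shows "f x \<in> span (B0 \<union> u ` J)"
proof -
  interpret f: Vector_Spaces.linear scale scale f by (fact f(1))
  let ?B1 = "B0 \<union> u ` J"
  have "f (u j) \<in> span ?B1" if "j \<in> J" for j
  proof -
    have "u (\<tau> j) \<in> span ?B1" "f (u j) - u (\<tau> j) \<in> span ?B1"
      using perm[OF that] span_mono[of B0 ?B1] by (auto intro: span_base)
    then have "u (\<tau> j) + (f (u j) - u (\<tau> j)) \<in> span ?B1"
      by (rule span_add)
    then show ?thesis
      by simp
  qed
  then have "f ` ?B1 \<subseteq> span ?B1"
    using f(2) span_base span_mono[of B0 ?B1] by blast
  then show ?thesis
    using x f.span_image[of ?B1] span_mono[of "f ` ?B1" "span ?B1"] by (auto simp: span_span)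
qed

lemma card_basis_trace_quotient:
  assumes B: "independent B" "finite B" and B0: "independent B0" "finite B0" "span B0 \<subseteq> span B"
    and J: "finite J" "u ` J \<subseteq> span B"
    and ind: "\<And>c. (\<Sum>j\<in>J. c j *s u j) \<in> span B0 \<Longrightarrow> \<forall>j\<in>J. c j = 0"
    and spanning: "\<And>w. w \<in> span B \<Longrightarrow> \<exists>v\<in>span (u ` J). w - v \<in> span B0"
    and f: "Vector_Spaces.linear scale scale f" "\<And>x. x \<in> span B0 \<Longrightarrow> f x \<in> span B0"
    and perm: "\<And>j. j \<in> J \<Longrightarrow> \<tau> j \<in> J \<and> f (u j) - u (\<tau> j) \<in> span B0"
  shows "card B = card B0 + card J"
    and "basis_trace scale B f - basis_trace scale B0 f = of_nat (card {j\<in>J. \<tau> j = j})"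
proof -
  note ext = independent_quotient_extension[where u = u, OF B0(1,2) J(1) ind]
  have span_B1: "span (B0 \<union> u ` J) = span B"
    using B0(3) J(2) spanning by (rule span_quotient_extension)
  have "card B = card (B0 \<union> u ` J)"
    using dim_span_eq_card_independent[OF B(1)] dim_span_eq_card_independent[OF ext(3)] span_B1 by simp
  also have "\<dots> = card B0 + card J"
    using B0(2) J(1) ext by (simp add: card_Un_disjoint card_image)
  finally show "card B = card B0 + card J" .
  have "f x \<in> span B" if "x \<in> span B" for x
    using span_quotient_extension_invariant[where u = u and \<tau> = \<tau>, OF f perm] that span_B1 by blast
  then have "basis_trace scale B f = basis_trace scale (B0 \<union> u ` J) f"
    using B ext(3) B0(2) J(1) span_B1 by (intro basis_trace_eq f(1)) auto
  then show "basis_trace scale B f - basis_trace scale B0 f = of_nat (card {j\<in>J. \<tau> j = j})"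
    using basis_trace_quotient_extension[where u = u and f = f and \<tau> = \<tau>, OF B0(1,2) J(1) ind f(2) perm]
    by simp
qed

end

definition multilinear_mons :: "nat \<Rightarrow> mon set" where
  "multilinear_mons n = {t. mset (leaves t) = mset_set {1..n}}"

lemma length_leaves_pos: "0 < length (leaves t)"
  by (induction t) auto

lemma finite_bounded_mons: "finite S \<Longrightarrow> finite {t. set (leaves t) \<subseteq> S \<and> length (leaves t) \<le> k}"
proof (induction k)
  case (Suc k)
  let ?A = "{t. set (leaves t) \<subseteq> S \<and> length (leaves t) \<le> k}"
  have "{t. set (leaves t) \<subseteq> S \<and> length (leaves t) \<le> Suc k} \<subseteq> V ` S \<union> case_prod M ` (?A \<times> ?A)"
  proof
    fix t assume t: "t \<in> {t. set (leaves t) \<subseteq> S \<and> length (leaves t) \<le> Suc k}"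
    show "t \<in> V ` S \<union> case_prod M ` (?A \<times> ?A)"
    proof (cases t)
      case (M a b)
      then have "length (leaves a) + length (leaves b) \<le> Suc k"
        using t by simp
      moreover have "0 < length (leaves a)" "0 < length (leaves b)"
        by (rule length_leaves_pos)+
      ultimately have "a \<in> ?A" "b \<in> ?A"
        using t M by (simp_all del: length_greater_0_conv)
      with M show ?thesis by auto
    qed (use t in auto)
  qed
  moreover have "finite (V ` S \<union> case_prod M ` (?A \<times> ?A))"
    using Suc by auto
  ultimately show ?case
    by (rule finite_subset)
qed (use length_leaves_pos in fastforce)

lemma finite_multilinear_mons: "finite (multilinear_mons n)"
proof -
  have "multilinear_mons n \<subseteq> {t. set (leaves t) \<subseteq> {1..n} \<and> length (leaves t) \<le> n}"
    by (auto simp: multilinear_mons_def dest: arg_cong[of _ _ set_mset] arg_cong[of _ _ size])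
  then show ?thesis
    using finite_bounded_mons[of "{1..n}" n] by (auto intro: finite_subset)
qed

lemma Pn_iff_keys: "p \<in> Pn n \<longleftrightarrow> Poly_Mapping.keys p \<subseteq> multilinear_mons n"
proof -
  have "mset [1..<n+1] = mset_set {1..n}"
    unfolding mset_upt by (simp add: atLeastLessThanSuc_atLeastAtMost)
  then show ?thesis
    by (auto simp: Pn_def multilinear_mons_def)
qed

lemma mon_poly_Pn: "m \<in> multilinear_mons n \<Longrightarrow> mon_poly m \<in> Pn n"
  by (simp add: Pn_iff_keys)

lemma Pn_subspace: "free.subspace (Pn n)"
  unfolding free.subspace_def
proof (intro conjI ballI allI)
  fix x y :: "'a npoly"
  assume "x \<in> Pn n" "y \<in> Pn n"
  then show "x + y \<in> Pn n"
    using keys_add[of x y] by (auto simp: Pn_iff_keys)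
next
  fix c and x :: "'a npoly"
  have "Poly_Mapping.keys (c \<cdot> x) \<subseteq> Poly_Mapping.keys x"
    by (auto simp: in_keys_iff)
  moreover assume "x \<in> Pn n"
  ultimately show "c \<cdot> x \<in> Pn n"
    by (auto simp: Pn_iff_keys)
qed (simp add: Pn_iff_keys)

lemma Pn_subset_span: "Pn n \<subseteq> free.span (mon_poly ` multilinear_mons n)"
proof
  fix p :: "'a npoly" assume "p \<in> Pn n"
  then have "(\<Sum>t\<in>Poly_Mapping.keys p. Poly_Mapping.lookup p t \<cdot> mon_poly t) \<in> free.span (mon_poly ` multilinear_mons n)"
    by (intro free.span_sum free.span_scale free.span_base) (auto simp: Pn_iff_keys)
  then show "p \<in> free.span (mon_poly ` multilinear_mons n)"
    by (subst poly_expansion)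
qed

fun rename :: "(nat \<Rightarrow> nat) \<Rightarrow> mon \<Rightarrow> mon" where
  "rename \<sigma> (V i) = V (\<sigma> i)"
| "rename \<sigma> (M s t) = M (rename \<sigma> s) (rename \<sigma> t)"

lemma leaves_rename: "leaves (rename \<sigma> t) = map \<sigma> (leaves t)"
  by (induction t) auto

lemma pact_mon_poly: "pact \<sigma> (mon_poly t) = mon_poly (rename \<sigma> t)"
proof -
  have "tsubst (\<lambda>i. X (\<sigma> i)) t = mon_poly (rename \<sigma> t)"
    by (induction t) (auto simp: X_def pmul_mon_poly)
  then show ?thesis
    by (simp add: pact_def psubst_single)
qed

lemma pact_linear: "Vector_Spaces.linear pscale pscale (pact \<sigma>)"
  by unfold_locales (simp_all add: pact_def psubst_add psubst_scale)

lemma image_mset_mset_set_permutes: "\<sigma> permutes A \<Longrightarrow> image_mset \<sigma> (mset_set A) = mset_set A"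
  by (simp add: image_mset_mset_set permutes_inj_on permutes_image)

lemma rename_multilinear_mons:
  assumes "\<sigma> permutes {1..n}" "t \<in> multilinear_mons n"
  shows "rename \<sigma> t \<in> multilinear_mons n"
  using assms by (simp add: multilinear_mons_def leaves_rename image_mset_mset_set_permutes)

lemma pact_Pn:
  assumes "\<sigma> permutes {1..n}" "p \<in> Pn n"
  shows "pact \<sigma> p \<in> Pn n"
proof -
  interpret pact: Vector_Spaces.linear pscale pscale "pact \<sigma>"
    by (rule pact_linear)
  have "pact \<sigma> p = (\<Sum>t\<in>Poly_Mapping.keys p. Poly_Mapping.lookup p t \<cdot> mon_poly (rename \<sigma> t))"
    by (subst poly_expansion) (simp add: pact.sum pact.scale pact_mon_poly)
  also have "\<dots> \<in> Pn n"
    using assms Pn_subspace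
    by (intro free.subspace_sum free.subspace_scale mon_poly_Pn rename_multilinear_mons)
       (auto simp: Pn_iff_keys)
  finally show ?thesis .
qed

lemma pact_IdA: "p \<in> IdA \<pi> \<rho> \<Longrightarrow> pact \<sigma> p \<in> IdA \<pi> \<rho>"
  by (simp add: pact_def IdA_psubst)

lemma some_basis:
  assumes "free.subspace W"
  defines "B \<equiv> SOME B. B \<subseteq> W \<and> \<not> free.dependent B \<and> free.span B = W"
  shows "B \<subseteq> W" "free.independent B" "free.span B = W"
proof -
  obtain B' where "B' \<subseteq> W" "free.independent B'" "W \<subseteq> free.span B'"
    by (meson free.basis_exists)
  moreover have "free.span B' \<subseteq> W"
    using \<open>B' \<subseteq> W\<close> assms(1) by (rule free.span_minimal)
  ultimately have "\<exists>B. B \<subseteq> W \<and> \<not> free.dependent B \<and> free.span B = W"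
    by blast
  then show "B \<subseteq> W" "free.independent B" "free.span B = W"
    unfolding B_def by (metis (mono_tags, lifting) someI_ex)+
qed

lemma subspace_modulo:
  assumes "free.subspace I"
  shows "free.subspace {w. \<exists>v\<in>free.span U. w - v \<in> I}"
  unfolding free.subspace_def
proof (intro conjI ballI allI CollectI)
  show "\<exists>v\<in>free.span U. 0 - v \<in> I"
    using assms free.span_zero free.subspace_0 by force
  fix x y assume "x \<in> {w. \<exists>v\<in>free.span U. w - v \<in> I}" "y \<in> {w. \<exists>v\<in>free.span U. w - v \<in> I}"
  then obtain v v' where "v \<in> free.span U" "x - v \<in> I" "v' \<in> free.span U" "y - v' \<in> I"
    by blast
  then show "\<exists>v\<in>free.span U. x + y - v \<in> I"
    using free.subspace_add[OF assms, of "x - v" "y - v'"]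
    by (intro bexI[of _ "v + v'"] free.span_add) (auto simp: algebra_simps)
next
  fix c x assume "x \<in> {w. \<exists>v\<in>free.span U. w - v \<in> I}"
  then obtain v where "v \<in> free.span U" "x - v \<in> I"
    by blast
  then show "\<exists>v\<in>free.span U. c \<cdot> x - v \<in> I"
    using free.subspace_scale[OF assms, of "x - v" c]
    by (intro bexI[of _ "c \<cdot> v"] free.span_scale) (auto simp: free.scale_right_diff_distrib)
qed

lemma Pn_modulo_span:
  assumes "free.subspace I" "\<And>m. m \<in> multilinear_mons n \<Longrightarrow> \<exists>v\<in>free.span U. mon_poly m - v \<in> I"
    and "w \<in> Pn n"
  shows "\<exists>v\<in>free.span U. w - v \<in> I"
proof -
  have "mon_poly ` multilinear_mons n \<subseteq> {w. \<exists>v\<in>free.span U. w - v \<in> I}"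
    using assms(2) by auto
  then have "free.span (mon_poly ` multilinear_mons n) \<subseteq> {w. \<exists>v\<in>free.span U. w - v \<in> I}"
    using subspace_modulo[OF assms(1)] by (rule free.span_minimal)
  then show ?thesis
    using Pn_subset_span assms(3) by blast
qed

lemma finite_independent_Pn: "B \<subseteq> Pn n \<Longrightarrow> free.independent B \<Longrightarrow> finite B"
  using free.independent_span_bound[OF finite_imageI[OF finite_multilinear_mons]] Pn_subset_span
  by (metis order_trans)

lemma codim_cochar_eq:
  fixes I :: "'k::field npoly set" and u :: "'j \<Rightarrow> 'k npoly"
  assumes I: "free.subspace I" "\<And>w. w \<in> I \<Longrightarrow> pact \<sigma> w \<in> I"
    and J: "finite J" "u ` J \<subseteq> Pn n"
    and ind: "\<And>c. (\<Sum>j\<in>J. c j \<cdot> u j) \<in> I \<Longrightarrow> \<forall>j\<in>J. c j = 0"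
    and spanning: "\<And>m. m \<in> multilinear_mons n \<Longrightarrow> \<exists>v\<in>free.span (u ` J). mon_poly m - v \<in> I"
    and \<sigma>: "\<sigma> permutes {1..n}"
    and perm: "\<And>j. j \<in> J \<Longrightarrow> \<tau> j \<in> J \<and> pact \<sigma> (u j) - u (\<tau> j) \<in> I"
  shows "codim I n = card J" and "cochar I n \<sigma> = of_nat (card {j\<in>J. \<tau> j = j})"
proof -
  let ?W = "Pn n :: 'k npoly set"
  let ?V = "Pn n \<inter> I"
  have W: "free.subspace ?W" and W0: "free.subspace ?V"
    using Pn_subspace I(1) by (auto intro: free.subspace_inter)
  define B where "B = (SOME B. B \<subseteq> ?W \<and> \<not> free.dependent B \<and> free.span B = ?W)"
  define B0 where "B0 = (SOME B. B \<subseteq> ?V \<and> \<not> free.dependent B \<and> free.span B = ?V)"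
  note B = some_basis[OF W, folded B_def] and B0 = some_basis[OF W0, folded B0_def]
  have fin: "finite B" "finite B0"
    using finite_independent_Pn B(1,2) B0(1,2) by blast+
  have span_uJ: "free.span (u ` J) \<subseteq> ?W"
    using J(2) W by (rule free.span_minimal)
  have span_mod: "\<exists>v\<in>free.span (u ` J). w - v \<in> free.span B0" if "w \<in> free.span B" for w
  proof -
    have "w \<in> ?W"
      using that B(3) by simp
    then obtain v where v: "v \<in> free.span (u ` J)" "w - v \<in> I"
      using Pn_modulo_span[OF I(1) spanning] by blast
    moreover have "w - v \<in> ?W"
      using free.subspace_diff[OF W \<open>w \<in> ?W\<close>] v(1) span_uJ by blast
    ultimately show ?thesis
      using B0(3) by auto
  qed
  have pact_B0: "pact \<sigma> x \<in> free.span B0" if "x \<in> free.span B0" for x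
    using that B0(3) pact_Pn[OF \<sigma>] I(2) by auto
  have ind_B0: "\<forall>j\<in>J. c j = 0" if "(\<Sum>j\<in>J. c j \<cdot> u j) \<in> free.span B0" for c
    using that B0(3) by (intro ind) simp
  have perm_B0: "\<tau> j \<in> J \<and> pact \<sigma> (u j) - u (\<tau> j) \<in> free.span B0" if "j \<in> J" for j
  proof -
    have "pact \<sigma> (u j) - u (\<tau> j) \<in> ?W"
      using perm[OF that] J(2) that pact_Pn[OF \<sigma>] free.subspace_diff[OF W] by blast
    then show ?thesis
      using perm[OF that] B0(3) by simp
  qed
  have "free.span B0 \<subseteq> free.span B" "u ` J \<subseteq> free.span B"
    using B(3) B0(3) J(2) by auto
  note quotient = free.card_basis_trace_quotient[OF B(2) fin(1) B0(2) fin(2) this(1) J(1) this(2)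
      ind_B0 span_mod pact_linear pact_B0 perm_B0]
  moreover have "free.dim ?W = card B" "free.dim ?V = card B0"
    using free.dim_span_eq_card_independent[OF B(2)] free.dim_span_eq_card_independent[OF B0(2)]
    by (simp_all add: B(3) B0(3))
  ultimately show "codim I n = card J" "cochar I n \<sigma> = of_nat (card {j\<in>J. \<tau> j = j})"
    using quotient by (simp_all add: codim_def pdim_def cochar_def ptrace_def basis_trace_def B_def B0_def Let_def)
qed

section \<open>The cocharacter of \<open>A\<^sub>\<pi>\<^sub>,\<^sub>\<rho>\<close>\<close>

lemma bicomm_eq_rename_canonical:
  assumes "L \<noteq> {#}" "R \<noteq> {#}"
  shows "bicomm_eq (rename \<sigma> (canonical L R)) (canonical (image_mset \<sigma> L) (image_mset \<sigma> R))"
proof -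
  have "rename \<sigma> (left_normed l rs) = left_normed (\<sigma> l) (map \<sigma> rs)" for l rs
    by (induction rs) auto
  then have "ls \<noteq> [] \<Longrightarrow> rename \<sigma> (canon ls rs) = canon (map \<sigma> ls) (map \<sigma> rs)" for ls rs
    by (induction ls rs rule: canon.induct) auto
  then show ?thesis
    using bicomm_eq_canonical[of "map \<sigma> (sorted_list_of_multiset L)" "map \<sigma> (sorted_list_of_multiset R)"] assms
    by (simp add: canonical_def mset_map)
qed

lemma finite_mset_splittings: "finite {(L, R). L + R = (A :: 'a multiset)}"
proof (rule finite_subset)
  show "{(L, R). L + R = A} \<subseteq> (\<lambda>L. (L, A - L)) ` (\<Union>k\<le>size A. multisets_of_size (set_mset A) k)"
    by (force simp: multisets_of_size_def)
qed auto

definition nonvanishing_splits :: "'k::field \<Rightarrow> 'k \<Rightarrow> nat \<Rightarrow> (nat multiset \<times> nat multiset) set" where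
  "nonvanishing_splits \<pi> \<rho> n =
     {(L, R). L + R = mset_set {1..n} \<and> L \<noteq> {#} \<and> R \<noteq> {#} \<and> canon_weight \<pi> \<rho> L R \<noteq> 0}"

lemma nonvanishing_splits_permute:
  assumes "\<sigma> permutes {1..n}" "x \<in> nonvanishing_splits \<pi> \<rho> n"
  shows "map_prod (image_mset \<sigma>) (image_mset \<sigma>) x \<in> nonvanishing_splits \<pi> \<rho> n"
proof -
  obtain L R where x: "x = (L, R)"
    by (cases x)
  then have "image_mset \<sigma> L + image_mset \<sigma> R = mset_set {1..n}"
    using assms image_mset_mset_set_permutes[OF assms(1)]
    by (simp add: nonvanishing_splits_def flip: image_mset_union)
  then show ?thesis
    using assms(2) by (simp add: x nonvanishing_splits_def canon_weight_def)
qed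

lemma multilinear_mon_mod_IdA:
  fixes \<pi> \<rho> :: "'k::field_char_0"
  assumes "\<pi> \<noteq> \<rho>" "2 \<le> n" and m: "m \<in> multilinear_mons n"
  shows "\<exists>v\<in>free.span ((\<lambda>x. mon_poly (canonical (fst x) (snd x))) ` nonvanishing_splits \<pi> \<rho> n).
           mon_poly m - v \<in> IdA \<pi> \<rho>"
proof -
  let ?u = "\<lambda>x. mon_poly (canonical (fst x) (snd x)) :: 'k npoly"
  have "size (mset (leaves m)) = n"
    using m by (simp add: multilinear_mons_def)
  then obtain s t where "m = M s t"
    using assms(2) by (cases m) auto
  note normal = bicomm_normal_form[OF this]
  let ?x = "(left_factors m, right_factors m)"
  have diff: "mon_poly m - ?u ?x \<in> IdA \<pi> \<rho>"
    using bicomm_eq_IdA[OF normal(1)] by simp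
  show ?thesis
  proof (cases "canon_weight \<pi> \<rho> (left_factors m) (right_factors m) = 0")
    case True
    then have "?u ?x \<in> IdA \<pi> \<rho>"
      using canonical_in_IdA_iff[OF assms(1) normal(2,3)] by simp
    then have "(mon_poly m - ?u ?x) + ?u ?x \<in> IdA \<pi> \<rho>"
      by (rule free.subspace_add[OF IdA_subspace diff])
    then show ?thesis
      by (intro bexI[of _ 0] free.span_zero) simp
  next
    case False
    then have "?x \<in> nonvanishing_splits \<pi> \<rho> n"
      using m normal(2,3) left_factors_plus_right_factors[of m] \<open>m = M s t\<close>
      by (simp add: nonvanishing_splits_def multilinear_mons_def)
    then have "?u ?x \<in> free.span (?u ` nonvanishing_splits \<pi> \<rho> n)"
      by (intro free.span_base imageI)
    with diff show ?thesis
      by blast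
  qed
qed

text \<open>For \<open>n \<ge> 2\<close>, \<open>P\<^sub>n(A\<^sub>\<pi>\<^sub>,\<^sub>\<rho>)\<close> has a basis of canonical monomials, permuted by \<open>S\<^sub>n\<close>.\<close>
theorem codim_cochar_IdA:
  fixes \<pi> \<rho> :: "'k::field_char_0"
  assumes "\<pi> \<noteq> \<rho>" "2 \<le> n" and \<sigma>: "\<sigma> permutes {1..n}"
  shows "codim (IdA \<pi> \<rho>) n = card (nonvanishing_splits \<pi> \<rho> n)"
    and "cochar (IdA \<pi> \<rho>) n \<sigma> =
           of_nat (card {x \<in> nonvanishing_splits \<pi> \<rho> n. map_prod (image_mset \<sigma>) (image_mset \<sigma>) x = x})"
proof -
  let ?J = "nonvanishing_splits \<pi> \<rho> n"
  let ?u = "\<lambda>x. mon_poly (canonical (fst x) (snd x)) :: 'k npoly"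
  let ?\<tau> = "map_prod (image_mset \<sigma>) (image_mset \<sigma>)"
  have J: "fst x + snd x = mset_set {1..n}" "fst x \<noteq> {#}" "snd x \<noteq> {#}"
      "canon_weight \<pi> \<rho> (fst x) (snd x) \<noteq> 0" if "x \<in> ?J" for x
    using that by (auto simp: nonvanishing_splits_def)
  have fin: "finite ?J"
    by (rule finite_subset[OF _ finite_mset_splittings[of "mset_set {1..n}"]])
       (auto simp: nonvanishing_splits_def)
  have multilinear: "?u ` ?J \<subseteq> Pn n"
    using J by (auto intro!: mon_poly_Pn simp: multilinear_mons_def mset_leaves_canonical)
  have ind: "\<forall>x\<in>?J. c x = 0" if "(\<Sum>x\<in>?J. c x \<cdot> ?u x) \<in> IdA \<pi> \<rho>" for c
    using canonical_IdA_combination[OF assms(1) fin _ that] J by auto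
  have perm: "?\<tau> x \<in> ?J \<and> pact \<sigma> (?u x) - ?u (?\<tau> x) \<in> IdA \<pi> \<rho>" if "x \<in> ?J" for x
    using nonvanishing_splits_permute[OF \<sigma> that] bicomm_eq_IdA[OF bicomm_eq_rename_canonical[OF J(2,3)[OF that]]]
    by (simp add: pact_mon_poly map_prod_def split_beta)
  note spanning = multilinear_mon_mod_IdA[OF assms(1,2)]
  show "codim (IdA \<pi> \<rho>) n = card ?J" "cochar (IdA \<pi> \<rho>) n \<sigma> = of_nat (card {x \<in> ?J. ?\<tau> x = x})"
    using codim_cochar_eq[OF IdA_subspace pact_IdA fin multilinear ind spanning \<sigma> perm] by simp_all
qed

lemma card_fixed_points_image:
  assumes "inj_on g A" "\<And>a. a \<in> A \<Longrightarrow> \<sigma> a \<in> A \<and> \<tau> (g a) = g (\<sigma> a)"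
  shows "card {x \<in> g ` A. \<tau> x = x} = card {a \<in> A. \<sigma> a = a}"
proof -
  have "{x \<in> g ` A. \<tau> x = x} = g ` {a \<in> A. \<sigma> a = a}"
  proof (intro equalityI subsetI)
    fix x assume "x \<in> {x \<in> g ` A. \<tau> x = x}"
    then obtain a where "a \<in> A" "x = g a" "g (\<sigma> a) = g a"
      using assms(2) by force
    then show "x \<in> g ` {a \<in> A. \<sigma> a = a}"
      using assms inj_onD[OF assms(1) \<open>g (\<sigma> a) = g a\<close>] by blast
  next
    fix x assume "x \<in> g ` {a \<in> A. \<sigma> a = a}"
    then show "x \<in> {x \<in> g ` A. \<tau> x = x}"
      using assms(2) by force
  qed
  then show ?thesis
    using assms(1) by (simp add: card_image inj_on_subset)
qed

lemma image_mset_remove1: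
  assumes "finite A" "\<sigma> permutes A" "j \<in> A"
  shows "image_mset \<sigma> (mset_set A - {#j#}) = mset_set A - {#\<sigma> j#}"
proof -
  have "{#j#} \<subseteq># mset_set A"
    using assms(1,3) by simp
  then show ?thesis
    using image_mset_mset_set_permutes[OF assms(2)] by (simp add: image_mset_Diff)
qed

lemma nonvanishing_splits_1_0:
  assumes "2 \<le> n"
  shows "nonvanishing_splits (1::'k::field) 0 n = (\<lambda>j. (mset_set {1..n} - {#j#}, {#j#})) ` {1..n}"
proof (intro equalityI subsetI)
  fix x assume x: "x \<in> nonvanishing_splits (1::'k) 0 n"
  obtain L R where LR: "x = (L, R)"
    by (cases x)
  then have sum: "L + R = mset_set {1..n}" and "R \<noteq> {#}" "canon_weight (1::'k) 0 L R \<noteq> 0"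
    using x by (auto simp: nonvanishing_splits_def)
  then have "size R = 1"
    by (cases "size R") (auto simp: canon_weight_def)
  then obtain j where j: "R = {#j#}"
    using size_1_singleton_mset by blast
  have eq: "add_mset j L = mset_set {1..n}"
    using sum j by simp
  then have "L = mset_set {1..n} - {#j#}"
    by (metis add_mset_remove_trivial)
  moreover have "j \<in># mset_set {1..n}"
    unfolding eq[symmetric] by simp
  ultimately show "x \<in> (\<lambda>j. (mset_set {1..n} - {#j#}, {#j#})) ` {1..n}"
    using LR j by simp
next
  fix x assume "x \<in> (\<lambda>j. (mset_set {1..n} - {#j#}, {#j#})) ` {1..n}"
  then obtain j where j: "j \<in> {1..n}" and x: "x = (mset_set {1..n} - {#j#}, {#j#})"
    by blast
  have "j \<in># mset_set {1..n}"
    using j by simp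
  then have "mset_set {1..n} - {#j#} + {#j#} = mset_set {1..n}"
    by simp
  moreover have "size (mset_set {1..n} - {#j#}) = n - 1"
    using j by (simp add: size_Diff_submset)
  ultimately show "x \<in> nonvanishing_splits (1::'k) 0 n"
    using assms by (auto simp: x nonvanishing_splits_def canon_weight_def)
qed

lemma nonvanishing_splits_swap: "nonvanishing_splits \<rho> \<pi> n = prod.swap ` nonvanishing_splits \<pi> \<rho> n"
proof (rule set_eqI)
  fix x :: "nat multiset \<times> nat multiset"
  show "x \<in> nonvanishing_splits \<rho> \<pi> n \<longleftrightarrow> x \<in> prod.swap ` nonvanishing_splits \<pi> \<rho> n"
    by (cases x) (simp add: nonvanishing_splits_def canon_weight_def add.commute mult.commute conj_ac)
qed

lemma codim_cochar_IdA_one_sided: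
  fixes \<pi> \<rho> :: "'k::field_char_0"
  assumes "\<pi> \<noteq> \<rho>" "2 \<le> n" and \<sigma>: "\<sigma> permutes {1..n}"
    and splits: "nonvanishing_splits \<pi> \<rho> n = g ` {1..n}" "inj_on g {1..n}"
    and equivariant: "\<And>j. j \<in> {1..n} \<Longrightarrow> map_prod (image_mset \<sigma>) (image_mset \<sigma>) (g j) = g (\<sigma> j)"
  shows "codim (IdA \<pi> \<rho>) n = n" "cochar (IdA \<pi> \<rho>) n \<sigma> = of_nat (card {j\<in>{1..n}. \<sigma> j = j})"
proof -
  have "\<sigma> j \<in> {1..n}" if "j \<in> {1..n}" for j
    using permutes_in_image[OF \<sigma>] that by blast
  then have "card {x \<in> g ` {1..n}. map_prod (image_mset \<sigma>) (image_mset \<sigma>) x = x} = card {j\<in>{1..n}. \<sigma> j = j}"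
    using splits(2) equivariant by (intro card_fixed_points_image) auto
  then show "codim (IdA \<pi> \<rho>) n = n" "cochar (IdA \<pi> \<rho>) n \<sigma> = of_nat (card {j\<in>{1..n}. \<sigma> j = j})"
    using codim_cochar_IdA[OF assms(1-3)] splits by (simp_all add: card_image)
qed

lemma codim_cochar_IdA_1_0:
  assumes "2 \<le> n" "\<sigma> permutes {1..n}"
  shows "codim (IdA (1::'k::field_char_0) 0) n = n"
    and "cochar (IdA (1::'k) 0) n \<sigma> = of_nat (card {j\<in>{1..n}. \<sigma> j = j})"
proof -
  let ?g = "\<lambda>j. (mset_set {1..n} - {#j#}, {#j#})"
  have inj: "inj_on ?g {1..n}"
    by (rule inj_onI) simp
  have equivariant: "map_prod (image_mset \<sigma>) (image_mset \<sigma>) (?g j) = ?g (\<sigma> j)" if "j \<in> {1..n}" for j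
    using image_mset_remove1[OF finite_atLeastAtMost assms(2) that] by simp
  show "codim (IdA (1::'k) 0) n = n" "cochar (IdA (1::'k) 0) n \<sigma> = of_nat (card {j\<in>{1..n}. \<sigma> j = j})"
    using codim_cochar_IdA_one_sided[OF one_neq_zero assms nonvanishing_splits_1_0[OF assms(1)] inj] equivariant
    by blast+
qed

lemma codim_cochar_IdA_0_1:
  assumes "2 \<le> n" "\<sigma> permutes {1..n}"
  shows "codim (IdA (0::'k::field_char_0) 1) n = n"
    and "cochar (IdA (0::'k) 1) n \<sigma> = of_nat (card {j\<in>{1..n}. \<sigma> j = j})"
proof -
  let ?g = "\<lambda>j. ({#j#}, mset_set {1..n} - {#j#})"
  have splits: "nonvanishing_splits (0::'k) 1 n = ?g ` {1..n}"
    unfolding nonvanishing_splits_swap[of 0 1] nonvanishing_splits_1_0[OF assms(1)] image_image by simp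
  have inj: "inj_on ?g {1..n}"
    by (rule inj_onI) simp
  have equivariant: "map_prod (image_mset \<sigma>) (image_mset \<sigma>) (?g j) = ?g (\<sigma> j)" if "j \<in> {1..n}" for j
    using image_mset_remove1[OF finite_atLeastAtMost assms(2) that] by simp
  show "codim (IdA (0::'k) 1) n = n" "cochar (IdA (0::'k) 1) n \<sigma> = of_nat (card {j\<in>{1..n}. \<sigma> j = j})"
    using codim_cochar_IdA_one_sided[OF zero_neq_one assms splits inj] equivariant by blast+
qed

lemma codim_cochar_IdA_degree_1:
  assumes \<sigma>: "\<sigma> permutes {1..1}"
  shows "codim (IdA \<pi> \<rho>) 1 = 1" and "cochar (IdA \<pi> \<rho>) 1 \<sigma> = 1"
proof -
  have ind: "\<forall>j\<in>{()}. c j = 0" if "(\<Sum>j\<in>{()}. c j \<cdot> X 1) \<in> IdA \<pi> \<rho>" for c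
  proof -
    have "Aeval \<pi> \<rho> (\<lambda>_. (1, 0)) (c () \<cdot> X 1) = 0"
      using that by (simp add: IdA_eq)
    then show ?thesis
      by (simp add: Aeval_scale prod_eq_iff)
  qed
  have spanning: "\<exists>v\<in>free.span ((\<lambda>_. X 1) ` {()}). mon_poly m - v \<in> IdA \<pi> \<rho>"
    if "m \<in> multilinear_mons 1" for m
  proof -
    have leaves: "mset (leaves m) = {#1#}"
      using that by (simp add: multilinear_mons_def)
    then have "length (leaves m) = 1"
      by (metis size_mset size_single)
    have "\<not> (\<exists>a b. m = M a b)"
    proof
      assume "\<exists>a b. m = M a b"
      then obtain a b where "m = M a b"
        by blast
      then have "length (leaves a) + length (leaves b) = 1"
        using \<open>length (leaves m) = 1\<close> by simp
      with length_leaves_pos[of a] length_leaves_pos[of b] show False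
        by linarith
    qed
    with leaves have "m = V 1"
      by (cases m) auto
    then show ?thesis
      by (intro bexI[of _ "X 1"] free.span_base) (simp_all add: X_def free.subspace_0[OF IdA_subspace])
  qed
  have "(\<lambda>_. X 1) ` {()} \<subseteq> Pn 1"
    by (simp add: X_def mon_poly_Pn multilinear_mons_def)
  moreover have "id j \<in> {()} \<and> pact \<sigma> (X 1) - X 1 \<in> IdA \<pi> \<rho>" if "j \<in> {()}" for j
    using permutes_in_image[OF \<sigma>, of 1] free.subspace_0[OF IdA_subspace] by (simp add: pact_def)
  ultimately show "codim (IdA \<pi> \<rho>) 1 = 1" "cochar (IdA \<pi> \<rho>) 1 \<sigma> = 1"
    using codim_cochar_eq[OF IdA_subspace pact_IdA _ _ ind spanning \<sigma>] by simp_all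
qed

section \<open>The characters \<open>\<chi>\<^sub>(\<^sub>n\<^sub>)\<close> and \<open>\<chi>\<^sub>(\<^sub>n\<^sub>-\<^sub>1\<^sub>,\<^sub>1\<^sub>)\<close>\<close>

lemma young_char_one_row:
  assumes "\<sigma> permutes {1..n}" "\<mu> \<noteq> []" "\<mu> ! 0 = n" "\<And>i. 0 < i \<Longrightarrow> i < length \<mu> \<Longrightarrow> \<mu> ! i = 0"
  shows "young_char \<mu> n \<sigma> = 1"
proof -
  let ?f0 = "\<lambda>k\<in>{1..n}. 0::nat"
  have "{f \<in> {1..n} \<rightarrow>\<^sub>E {0..<length \<mu>}. (\<forall>k\<in>{1..n}. f (\<sigma> k) = f k) \<and>
          (\<forall>i<length \<mu>. card {k\<in>{1..n}. f k = i} = \<mu> ! i)} = {?f0}"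
  proof (intro equalityI subsetI)
    fix f assume f: "f \<in> {f \<in> {1..n} \<rightarrow>\<^sub>E {0..<length \<mu>}. (\<forall>k\<in>{1..n}. f (\<sigma> k) = f k) \<and>
          (\<forall>i<length \<mu>. card {k\<in>{1..n}. f k = i} = \<mu> ! i)}"
    then have "card {k\<in>{1..n}. f k = 0} = card {1..n}"
      using assms(2,3) by simp
    then have "{k\<in>{1..n}. f k = 0} = {1..n}"
      by (intro card_subset_eq) auto
    with f show "f \<in> {?f0}"
      by (auto simp: PiE_iff extensional_def fun_eq_iff)
  next
    fix f assume "f \<in> {?f0}"
    moreover have "\<sigma> k \<in> {1..n}" if "k \<in> {1..n}" for k
      using permutes_in_image[OF assms(1)] that by blast
    moreover have "{k\<in>{1..n}. ?f0 k = i} = (if i = 0 then {1..n} else {})" for i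
      by auto
    then have "card {k\<in>{1..n}. ?f0 k = i} = \<mu> ! i" if "i < length \<mu>" for i
      using assms(3) assms(4)[of i] that by simp
    ultimately show "f \<in> {f \<in> {1..n} \<rightarrow>\<^sub>E {0..<length \<mu>}. (\<forall>k\<in>{1..n}. f (\<sigma> k) = f k) \<and>
          (\<forall>i<length \<mu>. card {k\<in>{1..n}. f k = i} = \<mu> ! i)}"
      using assms(2) by auto
  qed
  then show ?thesis
    by (simp add: young_char_def)
qed

lemma young_char_hook:
  assumes \<sigma>: "\<sigma> permutes {1..n}"
  shows "young_char [n - 1, 1] n \<sigma> = card {j\<in>{1..n}. \<sigma> j = j}"
proof -
  define e where "e j = (\<lambda>k\<in>{1..n}. if k = j then 1 else 0 :: nat)" for j
  let ?S = "{f \<in> {1..n} \<rightarrow>\<^sub>E {0..<length [n - 1, 1]}. (\<forall>k\<in>{1..n}. f (\<sigma> k) = f k) \<and>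
          (\<forall>i<length [n - 1, 1]. card {k\<in>{1..n}. f k = i} = [n - 1, 1] ! i)}"
  have \<sigma>_in: "\<sigma> k \<in> {1..n}" if "k \<in> {1..n}" for k
    using permutes_in_image[OF \<sigma>] that by blast
  have \<sigma>_inj: "\<sigma> k = \<sigma> k' \<longleftrightarrow> k = k'" for k k'
    using permutes_inj[OF \<sigma>] by (auto dest: injD)
  have "?S = e ` {j\<in>{1..n}. \<sigma> j = j}"
  proof (intro equalityI subsetI)
    fix f assume f: "f \<in> ?S"
    then have "card {k\<in>{1..n}. f k = 1} = 1"
      by auto
    then obtain j where j: "{k\<in>{1..n}. f k = 1} = {j}"
      by (rule card_1_singletonE)
    then have "j \<in> {1..n}" "f j = 1"
      by auto
    have "f k = e j k" for k
      using f j by (cases "k \<in> {1..n}") (auto simp: e_def PiE_iff extensional_def less_Suc_eq numeral_2_eq_2)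
    moreover have "\<sigma> j \<in> {k\<in>{1..n}. f k = 1}"
      using f \<sigma>_in \<open>j \<in> {1..n}\<close> \<open>f j = 1\<close> by auto
    ultimately show "f \<in> e ` {j\<in>{1..n}. \<sigma> j = j}"
      using j \<open>j \<in> {1..n}\<close> by (auto simp: fun_eq_iff)
  next
    fix f assume "f \<in> e ` {j\<in>{1..n}. \<sigma> j = j}"
    then obtain j where j: "j \<in> {1..n}" "\<sigma> j = j" and f: "f = e j"
      by blast
    have "{k\<in>{1..n}. f k = 0} = {1..n} - {j}" "{k\<in>{1..n}. f k = 1} = {j}"
      using j by (auto simp: f e_def)
    moreover have "f (\<sigma> k) = f k" if "k \<in> {1..n}" for k
      using that j \<sigma>_in[OF that] \<sigma>_inj[of k j] by (simp add: f e_def)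
    ultimately show "f \<in> ?S"
      using j by (auto simp: f e_def less_Suc_eq numeral_2_eq_2)
  qed
  moreover have "inj_on e {j\<in>{1..n}. \<sigma> j = j}"
    by (rule inj_onI) (auto simp: e_def fun_eq_iff split: if_splits)
  ultimately show ?thesis
    by (simp add: young_char_def card_image)
qed

lemma irr_char_row:
  assumes "\<sigma> permutes {1..n}"
  shows "irr_char [n] n \<sigma> = (1::'k::field)"
proof -
  have "{w. w permutes {0..<length [n]}} = {id}"
    by auto
  then show ?thesis
    using young_char_one_row[OF assms, of "[n]"] by (simp add: irr_char_def)
qed

lemma irr_char_hook:
  assumes \<sigma>: "\<sigma> permutes {1..n}" and "1 \<le> n"
  shows "irr_char [n - 1, 1] n \<sigma> = of_nat (young_char [n - 1, 1] n \<sigma>) - (1::'k::field)"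
proof -
  let ?shape = "[n - 1, 1]"
  define F where "F w = of_int (sign w) *
      (if \<forall>i<2. int i \<le> int (?shape ! i) + int (w i)
       then of_nat (young_char (map (\<lambda>i. nat (int (?shape ! i) + int (w i) - int i)) [0..<2]) n \<sigma>)
       else (0::'k))" for w :: "nat \<Rightarrow> nat"
  have "length ?shape = 2"
    by simp
  then have "irr_char ?shape n \<sigma> = (\<Sum>w | w permutes {0..<2}. F w)"
    unfolding irr_char_def F_def by (simp only:)
  also have "\<dots> = F id + F (Transposition.transpose 0 1)"
  proof -
    have "{0..<2::nat} = insert 0 {1}"
      by auto
    then show ?thesis
      using sum_over_permutations_insert[of "{1::nat}" 0 F] by simp
  qed
  also have "F id = of_nat (young_char ?shape n \<sigma>)"
    by (simp add: F_def less_Suc_eq numeral_2_eq_2)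
  also have "F (Transposition.transpose 0 1) = - 1"
  proof -
    have "map (\<lambda>i. nat (int (?shape ! i) + int (Transposition.transpose 0 1 i) - int i)) [0..<2] = [n, 0]"
      using assms(2) by (simp add: numeral_2_eq_2)
    moreover have "young_char [n, 0] n \<sigma> = 1"
      using \<sigma> by (rule young_char_one_row) (auto simp: less_Suc_eq numeral_2_eq_2)
    ultimately show ?thesis
      by (simp add: F_def sign_swap_id less_Suc_eq numeral_2_eq_2)
  qed
  finally show ?thesis
    by simp
qed

lemma permutation_char_decomposition:
  assumes "\<sigma> permutes {1..n}" "2 \<le> n"
  shows "irr_char [n] n \<sigma> + irr_char [n - 1, 1] n \<sigma> = (of_nat (card {j\<in>{1..n}. \<sigma> j = j}) :: 'k::field)"
  using irr_char_row[OF assms(1), where 'k = 'k] irr_char_hook[OF assms(1), where 'k = 'k]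
    young_char_hook[OF assms(1)] assms(2) by simp

theorem theorem5p2:
  shows
   "IdA (0::'k::field_char_0) 1 = tideal (bicomm_ids \<union> {pmul (X 1) (pmul (X 2) (X 3))})
  \<and> IdA (1::'k) 0 = tideal (bicomm_ids \<union> {pmul (pmul (X 1) (X 2)) (X 3)})
  \<and> (\<forall>\<sigma>. \<sigma> permutes {1..1} \<longrightarrow>
        cochar (IdA (0::'k) 1) 1 \<sigma> = irr_char [1] 1 \<sigma>
      \<and> cochar (IdA (1::'k) 0) 1 \<sigma> = irr_char [1] 1 \<sigma>)
  \<and> (\<forall>n\<ge>2. \<forall>\<sigma>. \<sigma> permutes {1..n} \<longrightarrow>
        cochar (IdA (0::'k) 1) n \<sigma> = cochar (IdA (1::'k) 0) n \<sigma>
      \<and> cochar (IdA (1::'k) 0) n \<sigma> = irr_char [n] n \<sigma> + irr_char [n - 1, 1] n \<sigma>)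
  \<and> (\<forall>n\<ge>1. codim (IdA (0::'k) 1) n = n \<and> codim (IdA (1::'k) 0) n = n)
  \<and> IdA (1::'k) (-1) = tideal bicomm_ids"
proof (intro conjI allI impI)
  show "IdA (0::'k) 1 = tideal (bicomm_ids \<union> {pmul (X 1) (pmul (X 2) (X 3))})"
    by (rule IdA_0_1)
  show "IdA (1::'k) 0 = tideal (bicomm_ids \<union> {pmul (pmul (X 1) (X 2)) (X 3)})"
    by (rule IdA_1_0)
  show "IdA (1::'k) (-1) = tideal bicomm_ids"
    by (rule IdA_1_minus_1)
  fix \<sigma> :: "nat \<Rightarrow> nat"
  assume \<sigma>: "\<sigma> permutes {1..1}"
  show "cochar (IdA (0::'k) 1) 1 \<sigma> = irr_char [1] 1 \<sigma>" "cochar (IdA (1::'k) 0) 1 \<sigma> = irr_char [1] 1 \<sigma>"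
    using codim_cochar_IdA_degree_1(2)[OF \<sigma>] irr_char_row[OF \<sigma>, where 'k = 'k] by simp_all
next
  fix n :: nat and \<sigma>
  assume n: "2 \<le> n" and \<sigma>: "\<sigma> permutes {1..n}"
  show "cochar (IdA (0::'k) 1) n \<sigma> = cochar (IdA (1::'k) 0) n \<sigma>"
    and "cochar (IdA (1::'k) 0) n \<sigma> = irr_char [n] n \<sigma> + irr_char [n - 1, 1] n \<sigma>"
    using codim_cochar_IdA_0_1(2)[OF n \<sigma>, where 'k = 'k] codim_cochar_IdA_1_0(2)[OF n \<sigma>, where 'k = 'k]
      permutation_char_decomposition[OF \<sigma> n, where 'k = 'k] by simp_all
next
  fix n :: nat
  assume "1 \<le> n"
  then have "n = 1 \<or> 2 \<le> n"
    by linarith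
  then show "codim (IdA (0::'k) 1) n = n" "codim (IdA (1::'k) 0) n = n"
    using codim_cochar_IdA_degree_1(1)[OF permutes_id, where 'a = 'k]
      codim_cochar_IdA_0_1(1)[OF _ permutes_id, where 'k = 'k]
      codim_cochar_IdA_1_0(1)[OF _ permutes_id, where 'k = 'k]
    by auto
qed

end
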